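(* Let $V\in BC^\infty(\mathbb{R}^2;\mathbb{R})$, $\mathcal{A}\in BC^\infty(\mathbb{R}^2;\mathbb{R}^2)$, $b\in\mathbb{R}$, $A(\mathbf{x})=(-x_2,0)$, $E=\{x_2>0\}$, and let $h_b^E$ be the closure in $L^2(E)$ of $(-\mathrm{i}\nabla-bA)^2$ defined on $C_c^\infty(\bar E)$. Let $Y\in\{\overline{P_1},\overline{P_2},\overline{W}\}$. Then $D(h_b^E)\subset D(Y)$ and there exists a constant $C$ such that $$\|Y(h_b^E+\lambda)^{-1}\|\le C\frac{\sqrt{1+\lambda}}{\lambda}$$ for all $\lambda>0$. In particular, $\overline{P_1}$, $\overline{P_2}$ and $\overline{W}$ are infinitesimally $h_b^E$-bounded.
   Context: $BC^\infty$ denotes smooth functions with all derivatives bounded. $C_c^\infty(\bar E)$ is the set of smooth functions on $E$ whose partial derivatives all extend continuously to $\bar E$ and which vanish outside $(-a,a)\times(0,a)$ for some $a>0$. For $j\in\{1,2\}$, $P_j=-\mathrm{i}\partial_j-bA_j-\mathcal{A}_j$ with domain $C_c^\infty(\bar E)$, $P=(P_1,P_2)$, and $W=-2\mathcal{A}\cdot P-\mathrm{i}(\nabla\cdot\mathcal{A})+\mathcal{A}^2+V$ with domain $C_c^\infty(\bar E)$; bars denote closures in $L^2(E)$. $h_b^E$ is self-adjoint and nonnegative. *)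

theory Defs
  imports "HOL-Analysis.Analysis"
begin

type_synonym R2 = "real^2"
type_synonym cfun = "R2 \<Rightarrow> complex"

definition pdiff :: "2 \<Rightarrow> (R2 \<Rightarrow> 'b::real_normed_vector) \<Rightarrow> R2 \<Rightarrow> 'b" where
  "pdiff i f x = vector_derivative (\<lambda>t. f (x + t *\<^sub>R axis i 1)) (at 0)"

fun iter_pd :: "2 list \<Rightarrow> (R2 \<Rightarrow> 'b::real_normed_vector) \<Rightarrow> R2 \<Rightarrow> 'b" where
  "iter_pd [] f = f"
| "iter_pd (i # ks) f = pdiff i (iter_pd ks f)"

definition smooth_on :: "R2 set \<Rightarrow> (R2 \<Rightarrow> 'b::real_normed_vector) \<Rightarrow> bool" where
  "smooth_on S f \<longleftrightarrow>
     (\<forall>ks. continuous_on S (iter_pd ks f) \<and>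
        (\<forall>i. \<forall>x\<in>S. (\<lambda>t. iter_pd ks f (x + t *\<^sub>R axis i 1)) differentiable (at 0)))"

definition BC_inf :: "(R2 \<Rightarrow> 'b::real_normed_vector) \<Rightarrow> bool" where
  "BC_inf f \<longleftrightarrow> smooth_on UNIV f \<and> (\<forall>ks. bounded (range (iter_pd ks f)))"

definition E :: "R2 set" where
  "E = {x. x $ 2 > 0}"

text \<open>C_c^infinity of the closure of E: smooth on E, all partial derivatives extend
  continuously to the closure of E, and vanishing outside (-a,a) x (0,a).\<close>
definition Cc :: "cfun set" where
  "Cc = {u. smooth_on E u \<and>
        (\<forall>ks. \<exists>g. continuous_on (closure E) g \<and> (\<forall>x\<in>E. g x = iter_pd ks u x)) \<and>
        (\<exists>a>0. \<forall>x\<in>E. \<not> (- a < x $ 1 \<and> x $ 1 < a \<and> x $ 2 < a) \<longrightarrow> u x = 0)}"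

definition L2 :: "cfun \<Rightarrow> bool" where
  "L2 f \<longleftrightarrow> f \<in> borel_measurable (lebesgue_on E) \<and>
            integrable (lebesgue_on E) (\<lambda>x. (cmod (f x))\<^sup>2)"

definition nrm :: "cfun \<Rightarrow> real" where
  "nrm f = sqrt (\<integral>x. (cmod (f x))\<^sup>2 \<partial>(lebesgue_on E))"

definition ip :: "cfun \<Rightarrow> cfun \<Rightarrow> complex" where
  "ip f g = (\<integral>x. f x * cnj (g x) \<partial>(lebesgue_on E))"

definition L2_conv :: "(nat \<Rightarrow> cfun) \<Rightarrow> cfun \<Rightarrow> bool" where
  "L2_conv \<phi> u \<longleftrightarrow> (\<forall>n. L2 (\<phi> n)) \<and> L2 u \<and> (\<lambda>n. nrm (\<lambda>x. \<phi> n x - u x)) \<longlonglongrightarrow> 0"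

text \<open>Free magnetic momenta P^0_j = -i d_j - b A_j with A(x) = (-x_2, 0).\<close>
definition P01 :: "real \<Rightarrow> cfun \<Rightarrow> cfun" where
  "P01 b u x = - \<i> * pdiff 1 u x + complex_of_real (b * x $ 2) * u x"

definition P02 :: "real \<Rightarrow> cfun \<Rightarrow> cfun" where
  "P02 b u x = - \<i> * pdiff 2 u x"

definition P1 :: "real \<Rightarrow> (R2 \<Rightarrow> real^2) \<Rightarrow> cfun \<Rightarrow> cfun" where
  "P1 b Av u x = P01 b u x - complex_of_real (Av x $ 1) * u x"

definition P2 :: "real \<Rightarrow> (R2 \<Rightarrow> real^2) \<Rightarrow> cfun \<Rightarrow> cfun" where
  "P2 b Av u x = P02 b u x - complex_of_real (Av x $ 2) * u x"

definition W :: "real \<Rightarrow> (R2 \<Rightarrow> real^2) \<Rightarrow> (R2 \<Rightarrow> real) \<Rightarrow> cfun \<Rightarrow> cfun" where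
  "W b Av V u x =
     - 2 * (complex_of_real (Av x $ 1) * P1 b Av u x + complex_of_real (Av x $ 2) * P2 b Av u x)
     - \<i> * complex_of_real (pdiff 1 (\<lambda>y. Av y $ 1) x + pdiff 2 (\<lambda>y. Av y $ 2) x) * u x
     + complex_of_real ((norm (Av x))\<^sup>2) * u x
     + complex_of_real (V x) * u x"

definition clos_graph :: "(cfun \<Rightarrow> cfun) \<Rightarrow> cfun \<Rightarrow> cfun \<Rightarrow> bool" where
  "clos_graph T u v \<longleftrightarrow>
     (\<exists>\<phi>. (\<forall>n. \<phi> n \<in> Cc) \<and> L2_conv \<phi> u \<and> L2_conv (\<lambda>n. T (\<phi> n)) v)"

text \<open>Closure of the quadratic form |(-i grad - bA) u|^2 on Cc:
  u lies in the form domain, with (closed) magnetic gradient (g1, g2).\<close>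
definition form_dom :: "real \<Rightarrow> cfun \<Rightarrow> cfun \<Rightarrow> cfun \<Rightarrow> bool" where
  "form_dom b u g1 g2 \<longleftrightarrow>
     (\<exists>\<phi>. (\<forall>n. \<phi> n \<in> Cc) \<and> L2_conv \<phi> u \<and>
          L2_conv (\<lambda>n. P01 b (\<phi> n)) g1 \<and> L2_conv (\<lambda>n. P02 b (\<phi> n)) g2)"

text \<open>Graph of h_b^E: the nonnegative self-adjoint operator associated with the
  closed form, i.e. (-i grad - bA)^2 on the closure of Cc (Neumann realisation).\<close>
definition h_graph :: "real \<Rightarrow> cfun \<Rightarrow> cfun \<Rightarrow> bool" where
  "h_graph b u f \<longleftrightarrow> L2 f \<and>
     (\<exists>g1 g2. form_dom b u g1 g2 \<and>
        (\<forall>v k1 k2. form_dom b v k1 k2 \<longrightarrow> ip g1 k1 + ip g2 k2 = ip f v))"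

end

theory Submission
  imports Defs "HOL-Real_Asymp.Real_Asymp"
begin

text \<open>
  Each of the three operators acts on \<open>C\<^sub>c\<^sup>\<infinity>(E)\<close> as
  \<open>Y \<psi> = d\<^sub>1 P\<^sup>0\<^sub>1 \<psi> + d\<^sub>2 P\<^sup>0\<^sub>2 \<psi> + c \<psi>\<close> with bounded \<open>C\<^sup>1\<close> coefficients. If \<open>h u = f\<close>,
  the closed magnetic gradient \<open>(g\<^sub>1, g\<^sub>2)\<close> of \<open>u\<close> satisfies
  \<open>\<parallel>g\<^sub>1\<parallel>\<^sup>2 + \<parallel>g\<^sub>2\<parallel>\<^sup>2 = \<langle>f, u\<rangle>\<close>, so applying \<open>Y\<close> along an approximating sequence of
  \<open>u\<close> shows that \<open>u\<close> lies in the domain of the closure of \<open>Y\<close>, with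
  \<open>\<parallel>Y u\<parallel> \<le> K (\<parallel>g\<^sub>1\<parallel> + \<parallel>g\<^sub>2\<parallel> + \<parallel>u\<parallel>)\<close>. Expanding
  \<open>\<parallel>(h + \<lambda>) u\<parallel>\<^sup>2 = \<parallel>f\<parallel>\<^sup>2 + 2\<lambda>(\<parallel>g\<^sub>1\<parallel>\<^sup>2 + \<parallel>g\<^sub>2\<parallel>\<^sup>2) + \<lambda>\<^sup>2\<parallel>u\<parallel>\<^sup>2\<close> bounds
  \<open>\<parallel>g\<^sub>j\<parallel>\<close> by \<open>\<lambda>\<^sup>-\<^sup>1\<^sup>/\<^sup>2\<parallel>(h + \<lambda>) u\<parallel>\<close> and \<open>\<parallel>u\<parallel>\<close> by \<open>\<lambda>\<^sup>-\<^sup>1\<parallel>(h + \<lambda>) u\<parallel>\<close>,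
  and \<open>\<parallel>g\<^sub>j\<parallel>\<^sup>2 \<le> \<parallel>f\<parallel> \<parallel>u\<parallel>\<close> gives the infinitesimal bound.

  The closure of \<open>Y\<close> must also be shown to be single-valued. Writing \<open>Y\<close> as a
  first-order operator with \<open>C\<^sup>1\<close> coefficients, integration by parts against
  \<open>C\<^sup>1\<close> test functions supported in a compact subset of the open half-plane
  identifies two limits weakly; a cutoff \<open>\<rho>(k x\<^sub>2)\<close> turns every \<open>Y \<theta>\<close> into a
  limit of such test functions, and the limits are themselves limits of \<open>Y \<theta>\<^sub>n\<close>.
\<close>

section \<open>Square-integrable functions on the half-plane\<close>

abbreviation lebE :: "R2 measure" where
  "lebE \<equiv> lebesgue_on E"

lemma open_E: "open E"
  unfolding E_def by (auto intro!: open_Collect_less continuous_intros)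

lemma E_sets_lebesgue: "E \<in> sets lebesgue"
  using open_E by (simp add: borel_open sets_completionI_sets)

lemma space_lebE [simp]: "space lebE = E"
  by (simp add: space_restrict_space)

lemma borel_measurable_cnj [measurable]:
  "f \<in> borel_measurable M \<Longrightarrow> (\<lambda>x. cnj (f x)) \<in> borel_measurable M"
  by (rule borel_measurable_continuous_on[where f=cnj]) (auto intro: continuous_intros)

lemma continuous_on_borel_measurable_lebE:
  "continuous_on E f \<Longrightarrow> f \<in> borel_measurable lebE"
  by (rule continuous_imp_measurable_on_sets_lebesgue[OF _ E_sets_lebesgue])

lemma L2_boundedI:
  assumes "f \<in> borel_measurable lebE" "integrable lebE g" "\<And>x. x \<in> E \<Longrightarrow> (cmod (f x))\<^sup>2 \<le> g x"
  shows "L2 f"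
  unfolding L2_def
proof
  show "integrable lebE (\<lambda>x. (cmod (f x))\<^sup>2)"
  proof (rule Bochner_Integration.integrable_bound[OF assms(2)])
    show "AE x in lebE. norm ((cmod (f x))\<^sup>2) \<le> norm (g x)"
      using assms(3) by (intro AE_I2) (fastforce intro: order_trans[OF _ abs_ge_self])
  qed (use assms(1) in measurable)
qed fact

lemma L2_add: assumes "L2 f" "L2 g" shows "L2 (\<lambda>x. f x + g x)"
proof (rule L2_boundedI)
  show "(\<lambda>x. f x + g x) \<in> borel_measurable lebE" using assms by (auto simp: L2_def)
  show "integrable lebE (\<lambda>x. 2 * (cmod (f x))\<^sup>2 + 2 * (cmod (g x))\<^sup>2)"
    using assms by (auto simp: L2_def)
  fix x
  have "(cmod (f x + g x))\<^sup>2 \<le> (cmod (f x) + cmod (g x))\<^sup>2"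
    by (simp add: power_mono norm_triangle_ineq)
  also have "\<dots> \<le> 2 * (cmod (f x))\<^sup>2 + 2 * (cmod (g x))\<^sup>2"
    using sum_squares_bound[of "cmod (f x)" "cmod (g x)"] by (simp add: power2_sum)
  finally show "(cmod (f x + g x))\<^sup>2 \<le> 2 * (cmod (f x))\<^sup>2 + 2 * (cmod (g x))\<^sup>2" .
qed

lemma L2_mult_bounded:
  assumes "L2 f" "h \<in> borel_measurable lebE" "\<And>x. x \<in> E \<Longrightarrow> cmod (h x) \<le> B"
  shows "L2 (\<lambda>x. h x * f x)"
proof (rule L2_boundedI)
  show "(\<lambda>x. h x * f x) \<in> borel_measurable lebE" using assms by (auto simp: L2_def)
  show "integrable lebE (\<lambda>x. B\<^sup>2 * (cmod (f x))\<^sup>2)"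
    using assms by (auto simp: L2_def)
  fix x assume "x \<in> E"
  then have "cmod (h x * f x) \<le> B * cmod (f x)"
    using assms(3) by (simp add: norm_mult mult_right_mono)
  then have "(cmod (h x * f x))\<^sup>2 \<le> (B * cmod (f x))\<^sup>2" by (intro power_mono) auto
  then show "(cmod (h x * f x))\<^sup>2 \<le> B\<^sup>2 * (cmod (f x))\<^sup>2" by (simp add: power_mult_distrib)
qed

lemma L2_cmult: "L2 f \<Longrightarrow> L2 (\<lambda>x. c * f x)"
  by (rule L2_mult_bounded[where B="cmod c"]) auto

lemma L2_diff: "L2 f \<Longrightarrow> L2 g \<Longrightarrow> L2 (\<lambda>x. f x - g x)"
  using L2_add[of f "\<lambda>x. - g x"] L2_cmult[of g "-1"] by simp

lemma L2_convD: "L2_conv \<phi> u \<Longrightarrow> L2 u" "L2_conv \<phi> u \<Longrightarrow> L2 (\<phi> n)"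
  by (auto simp: L2_conv_def)

lemma integrable_ip: assumes "L2 f" "L2 g"
  shows "integrable lebE (\<lambda>x. f x * cnj (g x))"
proof (rule Bochner_Integration.integrable_bound)
  show "integrable lebE (\<lambda>x. (cmod (f x))\<^sup>2 + (cmod (g x))\<^sup>2)" using assms by (auto simp: L2_def)
  show "AE x in lebE. norm (f x * cnj (g x)) \<le> norm ((cmod (f x))\<^sup>2 + (cmod (g x))\<^sup>2)"
  proof (intro AE_I2)
    fix x
    have "cmod (f x) * cmod (g x) \<le> (cmod (f x))\<^sup>2 + (cmod (g x))\<^sup>2"
      using sum_squares_bound[of "cmod (f x)" "cmod (g x)"]
        mult_nonneg_nonneg[OF norm_ge_zero norm_ge_zero, of "f x" "g x"] by linarith
    then show "norm (f x * cnj (g x)) \<le> norm ((cmod (f x))\<^sup>2 + (cmod (g x))\<^sup>2)"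
      by (simp add: norm_mult)
  qed
qed (use assms in \<open>auto simp: L2_def\<close>)

lemma nrm_nonneg: "0 \<le> nrm f"
  by (simp add: nrm_def)

lemma nrm_sq: "(nrm f)\<^sup>2 = (\<integral>x. (cmod (f x))\<^sup>2 \<partial>lebE)"
  unfolding nrm_def by (simp add: integral_nonneg_AE)

lemma ip_self: "ip f f = complex_of_real ((nrm f)\<^sup>2)"
proof -
  have "ip f f = (\<integral>x. complex_of_real ((cmod (f x))\<^sup>2) \<partial>lebE)"
    unfolding ip_def
    by (intro Bochner_Integration.integral_cong) (auto simp: complex_mult_cnj cmod_def power2_eq_square)
  also have "\<dots> = complex_of_real (\<integral>x. (cmod (f x))\<^sup>2 \<partial>lebE)"
    by (rule integral_complex_of_real)
  finally show ?thesis by (simp add: nrm_sq)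
qed

lemma ip_add_left: "L2 f \<Longrightarrow> L2 g \<Longrightarrow> L2 h \<Longrightarrow> ip (\<lambda>x. f x + g x) h = ip f h + ip g h"
  unfolding ip_def by (simp add: distrib_right integrable_ip)

lemma ip_add_right: "L2 f \<Longrightarrow> L2 g \<Longrightarrow> L2 h \<Longrightarrow> ip h (\<lambda>x. f x + g x) = ip h f + ip h g"
  unfolding ip_def by (simp add: distrib_left integrable_ip)

lemma ip_diff_left: "L2 f \<Longrightarrow> L2 g \<Longrightarrow> L2 h \<Longrightarrow> ip (\<lambda>x. f x - g x) h = ip f h - ip g h"
  unfolding ip_def by (simp add: left_diff_distrib integrable_ip)

lemma ip_diff_right: "L2 f \<Longrightarrow> L2 g \<Longrightarrow> L2 h \<Longrightarrow> ip h (\<lambda>x. f x - g x) = ip h f - ip h g"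
  unfolding ip_def by (simp add: right_diff_distrib integrable_ip)

lemma ip_cmult_left: "ip (\<lambda>x. c * f x) g = c * ip f g"
  unfolding ip_def by (simp add: mult.assoc)

lemma ip_cmult_right: "ip f (\<lambda>x. c * g x) = cnj c * ip f g"
  unfolding ip_def by (simp add: mult.left_commute)

lemma ip_commute: "ip g f = cnj (ip f g)"
  unfolding ip_def by (simp flip: Bochner_Integration.integral_cnj add: mult.commute)

lemma integral_mult_le_sqrt:
  fixes f g :: "'a \<Rightarrow> real"
  assumes "integrable M (\<lambda>x. (f x)\<^sup>2)" "integrable M (\<lambda>x. (g x)\<^sup>2)" "integrable M (\<lambda>x. f x * g x)"
    and "f \<in> borel_measurable M" "g \<in> borel_measurable M"
    and "\<And>x. 0 \<le> f x" "\<And>x. 0 \<le> g x"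
  shows "(\<integral>x. f x * g x \<partial>M) \<le> sqrt (\<integral>x. (f x)\<^sup>2 \<partial>M) * sqrt (\<integral>x. (g x)\<^sup>2 \<partial>M)"
proof -
  have nn: "(\<integral>\<^sup>+x. ennreal (h x) \<partial>M) = ennreal (\<integral>x. h x \<partial>M)"
    if "integrable M h" "\<And>x. 0 \<le> h x" for h :: "'a \<Rightarrow> real"
    using that by (intro nn_integral_eq_integral) auto
  have "(\<integral>\<^sup>+x. ennreal (f x) * ennreal (g x) \<partial>M)\<^sup>2
      \<le> (\<integral>\<^sup>+x. ennreal (f x) ^ 2 \<partial>M) * (\<integral>\<^sup>+x. ennreal (g x) ^ 2 \<partial>M)"
    using assms(4,5) by (intro Cauchy_Schwarz_nn_integral) auto
  also have "(\<lambda>x. ennreal (f x) * ennreal (g x)) = (\<lambda>x. ennreal (f x * g x))"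
    using assms(6,7) by (simp add: ennreal_mult)
  also have "(\<lambda>x. ennreal (f x) ^ 2) = (\<lambda>x. ennreal ((f x)\<^sup>2))"
    by (simp add: ennreal_power assms(6))
  also have "(\<lambda>x. ennreal (g x) ^ 2) = (\<lambda>x. ennreal ((g x)\<^sup>2))"
    by (simp add: ennreal_power assms(7))
  finally have "ennreal (\<integral>x. f x * g x \<partial>M) ^ 2
      \<le> ennreal (\<integral>x. (f x)\<^sup>2 \<partial>M) * ennreal (\<integral>x. (g x)\<^sup>2 \<partial>M)"
    by (simp only: nn[OF assms(3) mult_nonneg_nonneg[OF assms(6,7)]] nn[OF assms(1) zero_le_power2]
        nn[OF assms(2) zero_le_power2])
  moreover have "0 \<le> (\<integral>x. f x * g x \<partial>M)" "0 \<le> (\<integral>x. (f x)\<^sup>2 \<partial>M)" "0 \<le> (\<integral>x. (g x)\<^sup>2 \<partial>M)"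
    using assms(6,7) by (auto intro: integral_nonneg)
  ultimately have "(\<integral>x. f x * g x \<partial>M)\<^sup>2 \<le> (\<integral>x. (f x)\<^sup>2 \<partial>M) * (\<integral>x. (g x)\<^sup>2 \<partial>M)"
    by (simp only: ennreal_power ennreal_mult[symmetric] ennreal_le_iff mult_nonneg_nonneg)
  then show ?thesis
    by (metis real_le_rsqrt real_sqrt_mult)
qed

lemma integrable_norm_mult: assumes "L2 f" "L2 g"
  shows "integrable lebE (\<lambda>x. cmod (f x) * cmod (g x))"
  using integrable_norm[OF integrable_ip[OF assms]] by (simp add: norm_mult)

lemma ip_Cauchy_Schwarz: assumes "L2 f" "L2 g" shows "cmod (ip f g) \<le> nrm f * nrm g"
proof -
  have "cmod (ip f g) \<le> (\<integral>x. norm (f x * cnj (g x)) \<partial>lebE)"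
    unfolding ip_def by (rule integral_norm_bound)
  also have "\<dots> = (\<integral>x. cmod (f x) * cmod (g x) \<partial>lebE)"
    by (simp add: norm_mult)
  also have "\<dots> \<le> nrm f * nrm g"
    unfolding nrm_def using assms
    by (intro integral_mult_le_sqrt integrable_norm_mult) (auto simp: L2_def)
  finally show ?thesis .
qed

lemma nrm_triangle: assumes "L2 f" "L2 g" shows "nrm (\<lambda>x. f x + g x) \<le> nrm f + nrm g"
proof -
  have "(nrm (\<lambda>x. f x + g x))\<^sup>2 = Re (ip (\<lambda>x. f x + g x) (\<lambda>x. f x + g x))"
    by (simp add: ip_self)
  also have "\<dots> = Re (ip f f) + Re (ip f g) + Re (ip g f) + Re (ip g g)"
    using assms by (simp add: ip_add_left ip_add_right L2_add)
  also have "\<dots> \<le> (nrm f)\<^sup>2 + 2 * (nrm f * nrm g) + (nrm g)\<^sup>2"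
    using ip_Cauchy_Schwarz[OF assms] ip_Cauchy_Schwarz[OF assms(2,1)] complex_Re_le_cmod[of "ip f g"]
      complex_Re_le_cmod[of "ip g f"] by (simp add: ip_self mult.commute[of "nrm g"])
  also have "\<dots> = (nrm f + nrm g)\<^sup>2" by (simp add: power2_sum)
  finally show ?thesis
    by (rule power2_le_imp_le) (simp add: nrm_nonneg)
qed

lemma nrm_mult_le:
  assumes "L2 f" "h \<in> borel_measurable lebE" "\<And>x. x \<in> E \<Longrightarrow> cmod (h x) \<le> B" "0 \<le> B"
  shows "nrm (\<lambda>x. h x * f x) \<le> B * nrm f"
proof -
  have "(\<integral>x. (cmod (h x * f x))\<^sup>2 \<partial>lebE) \<le> (\<integral>x. B\<^sup>2 * (cmod (f x))\<^sup>2 \<partial>lebE)"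
  proof (rule integral_mono_AE)
    show "integrable lebE (\<lambda>x. (cmod (h x * f x))\<^sup>2)"
      using L2_mult_bounded[OF assms(1-3)] by (simp add: L2_def)
    show "AE x in lebE. (cmod (h x * f x))\<^sup>2 \<le> B\<^sup>2 * (cmod (f x))\<^sup>2"
      using assms(3) by (intro AE_I2) (simp add: norm_mult power_mult_distrib mult_right_mono power_mono)
  qed (use assms in \<open>simp add: L2_def\<close>)
  then have "(nrm (\<lambda>x. h x * f x))\<^sup>2 \<le> (B * nrm f)\<^sup>2"
    by (simp add: power_mult_distrib nrm_sq)
  then show ?thesis
    by (rule power2_le_imp_le) (use assms(4) nrm_nonneg in simp)
qed

lemma ip_tendsto_left:
  assumes "L2_conv \<phi> u" "L2 g" shows "(\<lambda>n. ip (\<phi> n) g) \<longlonglongrightarrow> ip u g"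
proof -
  have L: "\<And>n. L2 (\<phi> n)" "L2 u" and c: "(\<lambda>n. nrm (\<lambda>x. \<phi> n x - u x)) \<longlonglongrightarrow> 0"
    using assms(1) by (auto simp: L2_conv_def)
  have "(\<lambda>n. ip (\<lambda>x. \<phi> n x - u x) g) \<longlonglongrightarrow> 0"
  proof (rule Lim_null_comparison)
    show "\<forall>\<^sub>F n in sequentially. norm (ip (\<lambda>x. \<phi> n x - u x) g) \<le> nrm (\<lambda>x. \<phi> n x - u x) * nrm g"
      using ip_Cauchy_Schwarz[OF L2_diff[OF L] assms(2)] by auto
    show "(\<lambda>n. nrm (\<lambda>x. \<phi> n x - u x) * nrm g) \<longlonglongrightarrow> 0"
      using tendsto_mult_left_zero[OF c] by simp
  qed
  then show ?thesis
    using L assms(2) by (simp add: ip_diff_left LIM_zero_cancel)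
qed

lemma ip_tendsto_right:
  assumes "L2_conv \<phi> u" "L2 g" shows "(\<lambda>n. ip g (\<phi> n)) \<longlonglongrightarrow> ip g u"
  using tendsto_cnj[OF ip_tendsto_left[OF assms]] by (simp add: ip_commute[of g])

section \<open>Partial derivatives\<close>

abbreviation ax :: "2 \<Rightarrow> R2" where
  "ax i \<equiv> axis i 1"

definition pdifferentiable :: "(R2 \<Rightarrow> 'b::real_normed_vector) \<Rightarrow> 2 \<Rightarrow> R2 \<Rightarrow> bool" where
  "pdifferentiable f i x \<longleftrightarrow> (\<lambda>t. f (x + t *\<^sub>R ax i)) differentiable (at 0)"

lemma pdiff_has_vector_derivative:
  "pdifferentiable f i x \<Longrightarrow> ((\<lambda>t. f (x + t *\<^sub>R ax i)) has_vector_derivative pdiff i f x) (at 0)"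
  unfolding pdifferentiable_def pdiff_def using vector_derivative_works by blast

lemma pdiff_eqI:
  assumes "((\<lambda>t. f (x + t *\<^sub>R ax i)) has_vector_derivative D) (at 0)"
  shows "pdifferentiable f i x" "pdiff i f x = D"
  using assms unfolding pdifferentiable_def pdiff_def
  by (auto intro: differentiableI_vector vector_derivative_at)

lemma pdiff_has_vector_derivative_line:
  assumes "pdifferentiable f i (x + t *\<^sub>R ax i)"
  shows "((\<lambda>s. f (x + s *\<^sub>R ax i)) has_vector_derivative pdiff i f (x + t *\<^sub>R ax i)) (at t)"
proof -
  have "((\<lambda>r. f ((x + t *\<^sub>R ax i) + r *\<^sub>R ax i)) \<circ> (\<lambda>s. s - t)
      has_vector_derivative 1 *\<^sub>R pdiff i f (x + t *\<^sub>R ax i)) (at t)"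
    using pdiff_has_vector_derivative[OF assms]
    by (intro vector_diff_chain_at) (auto intro!: derivative_eq_intros)
  moreover have "(\<lambda>r. f ((x + t *\<^sub>R ax i) + r *\<^sub>R ax i)) \<circ> (\<lambda>s. s - t) = (\<lambda>s. f (x + s *\<^sub>R ax i))"
    by (rule ext) (simp add: algebra_simps scaleR_diff_left)
  ultimately show ?thesis by simp
qed

lemma pdiff_transform_open:
  assumes "open S" "x \<in> S" "\<And>y. y \<in> S \<Longrightarrow> f y = g y" "pdifferentiable f i x"
  shows "pdifferentiable g i x" "pdiff i g x = pdiff i f x"
proof -
  have "open {t::real. x + t *\<^sub>R ax i \<in> S}"
    using continuous_open_vimage[OF assms(1), of "\<lambda>t::real. x + t *\<^sub>R ax i"]
    by (auto simp: vimage_def intro: continuous_intros)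
  then have "((\<lambda>t. g (x + t *\<^sub>R ax i)) has_vector_derivative pdiff i f x) (at 0)"
    using assms by (intro has_vector_derivative_transform_within_open[OF pdiff_has_vector_derivative]) auto
  then show "pdifferentiable g i x" "pdiff i g x = pdiff i f x" by (auto dest: pdiff_eqI)
qed

lemma pdiff_const: "pdifferentiable (\<lambda>y. c) i x" "pdiff i (\<lambda>y. c) x = 0"
  using pdiff_eqI[OF has_vector_derivative_const] by auto

lemma pdiff_eq_0_open:
  fixes f :: "R2 \<Rightarrow> 'b::real_normed_vector"
  assumes "open S" "x \<in> S" "\<And>y. y \<in> S \<Longrightarrow> f y = 0"
  shows "pdifferentiable f i x" "pdiff i f x = 0"
  using pdiff_transform_open[OF assms(1,2), of "\<lambda>_. 0" f, OF _ pdiff_const(1)] assms(3) pdiff_const(2)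
  by auto

lemma pdiff_add:
  fixes f g :: "R2 \<Rightarrow> 'b::real_normed_vector"
  assumes "pdifferentiable f i x" "pdifferentiable g i x"
  shows "pdifferentiable (\<lambda>y. f y + g y) i x" "pdiff i (\<lambda>y. f y + g y) x = pdiff i f x + pdiff i g x"
  using has_vector_derivative_add[OF pdiff_has_vector_derivative[OF assms(1)] pdiff_has_vector_derivative[OF assms(2)]]
  by (auto dest: pdiff_eqI)

lemma pdiff_mult:
  fixes f g :: cfun
  assumes "pdifferentiable f i x" "pdifferentiable g i x"
  shows "pdifferentiable (\<lambda>y. f y * g y) i x" "pdiff i (\<lambda>y. f y * g y) x = pdiff i f x * g x + f x * pdiff i g x"
  using has_vector_derivative_mult[OF pdiff_has_vector_derivative[OF assms(1)] pdiff_has_vector_derivative[OF assms(2)]]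
  by (auto dest: pdiff_eqI simp: algebra_simps)

lemma pdiff_cnj:
  fixes f :: cfun
  assumes "pdifferentiable f i x"
  shows "pdifferentiable (\<lambda>y. cnj (f y)) i x" "pdiff i (\<lambda>y. cnj (f y)) x = cnj (pdiff i f x)"
  using has_vector_derivative_cnj[OF pdiff_has_vector_derivative[OF assms(1)]]
  by (auto dest: pdiff_eqI)

lemma pdiff_of_real:
  fixes f :: "R2 \<Rightarrow> real"
  assumes "pdifferentiable f i x"
  shows "pdifferentiable (\<lambda>y. complex_of_real (f y)) i x"
    "pdiff i (\<lambda>y. complex_of_real (f y)) x = complex_of_real (pdiff i f x)"
proof -
  have "((\<lambda>t. f (x + t *\<^sub>R ax i)) has_field_derivative pdiff i f x) (at 0)"
    using pdiff_has_vector_derivative[OF assms] by (simp add: has_real_derivative_iff_has_vector_derivative)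
  from has_vector_derivative_of_real[OF this]
  show "pdifferentiable (\<lambda>y. complex_of_real (f y)) i x"
    "pdiff i (\<lambda>y. complex_of_real (f y)) x = complex_of_real (pdiff i f x)"
    by (auto dest: pdiff_eqI)
qed

lemma pdiff_vec_nth:
  fixes F :: "R2 \<Rightarrow> real^2"
  assumes "pdifferentiable F i x"
  shows "pdifferentiable (\<lambda>y. F y $ j) i x" "pdiff i (\<lambda>y. F y $ j) x = pdiff i F x $ j"
  using bounded_linear.has_vector_derivative[OF bounded_linear_vec_nth pdiff_has_vector_derivative[OF assms], of j]
  by (auto dest: pdiff_eqI)

definition C1_on :: "R2 set \<Rightarrow> cfun \<Rightarrow> bool" where
  "C1_on S f \<longleftrightarrow> continuous_on S f \<and> (\<forall>i. \<forall>x\<in>S. pdifferentiable f i x) \<and> (\<forall>i. continuous_on S (pdiff i f))"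

lemma C1_onD:
  "C1_on S f \<Longrightarrow> continuous_on S f"
  "C1_on S f \<Longrightarrow> x \<in> S \<Longrightarrow> pdifferentiable f i x"
  "C1_on S f \<Longrightarrow> continuous_on S (pdiff i f)"
  by (auto simp: C1_on_def)

lemma C1_on_subset: "C1_on S f \<Longrightarrow> T \<subseteq> S \<Longrightarrow> C1_on T f"
  by (auto simp: C1_on_def intro: continuous_on_subset)

lemma C1_on_cong:
  assumes "open S" "C1_on S f" "\<And>y. y \<in> S \<Longrightarrow> f y = g y"
  shows "C1_on S g"
proof -
  have p: "pdifferentiable g i x \<and> pdiff i g x = pdiff i f x" if "x \<in> S" for i x
    using pdiff_transform_open[OF assms(1) that assms(3)] C1_onD(2)[OF assms(2) that] by auto
  show ?thesis unfolding C1_on_def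
  proof (intro conjI allI ballI)
    show "continuous_on S g" using C1_onD(1)[OF assms(2)] assms(3) by (simp cong: continuous_on_cong)
    show "pdifferentiable g i x" if "x \<in> S" for i x using p[OF that] by simp
    show "continuous_on S (pdiff i g)" for i
      using C1_onD(3)[OF assms(2), of i] p by (simp cong: continuous_on_cong)
  qed
qed

lemma C1_on_Un: "open S \<Longrightarrow> open T \<Longrightarrow> C1_on S f \<Longrightarrow> C1_on T f \<Longrightarrow> C1_on (S \<union> T) f"
  unfolding C1_on_def by (auto intro: continuous_on_open_Un)

lemma C1_on_const: "C1_on S (\<lambda>y. c)"
proof -
  have "pdiff i (\<lambda>y. c) = (\<lambda>x. 0)" for i
    using pdiff_const(2) by auto
  then show ?thesis unfolding C1_on_def using pdiff_const(1) by auto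
qed

lemma C1_on_add: assumes "C1_on S f" "C1_on S g" shows "C1_on S (\<lambda>y. f y + g y)"
proof -
  have "continuous_on S (\<lambda>y. pdiff i f y + pdiff i g y)" for i
    using C1_onD(1,3)[OF assms(1)] C1_onD(1,3)[OF assms(2)] by (auto intro!: continuous_intros)
  then show ?thesis
    using assms unfolding C1_on_def
    by (auto intro: continuous_intros pdiff_add(1) continuous_on_eq simp: pdiff_add(2))
qed

lemma C1_on_mult: assumes "C1_on S f" "C1_on S g" shows "C1_on S (\<lambda>y. f y * g y)"
proof -
  have "continuous_on S (\<lambda>y. pdiff i f y * g y + f y * pdiff i g y)" for i
    using C1_onD(1,3)[OF assms(1)] C1_onD(1,3)[OF assms(2)] by (auto intro!: continuous_intros)
  then show ?thesis
    using assms unfolding C1_on_def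
    by (auto intro: continuous_intros pdiff_mult(1) continuous_on_eq simp: pdiff_mult(2))
qed

lemma C1_on_cnj: assumes "C1_on S f" shows "C1_on S (\<lambda>y. cnj (f y))"
proof -
  have "continuous_on S (\<lambda>y. cnj (pdiff i f y))" for i
    using C1_onD(3)[OF assms] by (auto intro!: continuous_intros)
  then show ?thesis
    using assms unfolding C1_on_def
    by (auto intro: continuous_intros pdiff_cnj(1) continuous_on_eq simp: pdiff_cnj(2))
qed

lemma C1_on_of_real_linear: "C1_on S (\<lambda>y. complex_of_real (c * y $ j))"
proof -
  have "((\<lambda>t. c * (x + t *\<^sub>R ax i) $ j) has_vector_derivative c * ax i $ j) (at 0)" for i x
    unfolding vector_add_component vector_scaleR_component by (auto intro!: derivative_eq_intros)
  from pdiff_of_real[OF pdiff_eqI(1)[OF this]] pdiff_eqI(2)[OF this] show ?thesis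
    unfolding C1_on_def by (auto intro!: continuous_intros)
qed

lemma smooth_onD:
  "smooth_on S f \<Longrightarrow> continuous_on S (iter_pd ks f)"
  "smooth_on S f \<Longrightarrow> x \<in> S \<Longrightarrow> pdifferentiable (iter_pd ks f) i x"
  by (auto simp: smooth_on_def pdifferentiable_def)

lemma C1_on_of_real_iter_pd:
  fixes g :: "R2 \<Rightarrow> real"
  assumes "smooth_on UNIV g"
  shows "C1_on S (\<lambda>y. complex_of_real (iter_pd ks g y))"
proof -
  have d: "pdiff i (\<lambda>y. complex_of_real (iter_pd ks g y)) = (\<lambda>y. complex_of_real (iter_pd (i # ks) g y))" for i
    using pdiff_of_real(2)[OF smooth_onD(2)[OF assms]] by (simp add: fun_eq_iff)
  have "continuous_on S (\<lambda>y. complex_of_real (iter_pd ks' g y))" for ks'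
    using continuous_on_subset[OF smooth_onD(1)[OF assms, of ks']] by (auto intro: continuous_intros)
  then show ?thesis
    unfolding C1_on_def d using pdiff_of_real(1)[OF smooth_onD(2)[OF assms]] by blast
qed

lemma iter_pd_vec_nth:
  fixes F :: "R2 \<Rightarrow> real^2"
  assumes "smooth_on UNIV F"
  shows "iter_pd ks (\<lambda>y. F y $ j) = (\<lambda>y. iter_pd ks F y $ j)"
proof (induction ks)
  case (Cons i ks)
  then show ?case
    using pdiff_vec_nth(2)[OF smooth_onD(2)[OF assms]] by auto
qed simp

lemma BC_inf_vec_nth:
  fixes F :: "R2 \<Rightarrow> real^2"
  assumes "BC_inf F"
  shows "BC_inf (\<lambda>y. F y $ j)"
proof -
  have F: "smooth_on UNIV F" "bounded (range (iter_pd ks F))" for ks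
    using assms by (auto simp: BC_inf_def)
  have "smooth_on UNIV (\<lambda>y. F y $ j)"
    unfolding smooth_on_def iter_pd_vec_nth[OF F(1)]
    using smooth_onD[OF F(1)] pdiff_vec_nth(1)[OF smooth_onD(2)[OF F(1)]]
    by (auto intro: continuous_intros simp: pdifferentiable_def)
  moreover have "bounded (range (\<lambda>y. iter_pd ks F y $ j))" for ks
  proof -
    obtain B where "\<And>y. norm (iter_pd ks F y) \<le> B"
      using F(2)[of ks] unfolding bounded_iff by blast
    then show ?thesis
      unfolding bounded_iff by (intro exI[of _ B]) (auto intro: order_trans[OF component_le_norm_cart])
  qed
  ultimately show ?thesis
    unfolding BC_inf_def iter_pd_vec_nth[OF F(1)] by simp
qed

lemma Cc_C1_on: assumes "u \<in> Cc" shows "C1_on E u" "C1_on E (pdiff j u)"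
proof -
  have s: "smooth_on E u" using assms by (simp add: Cc_def)
  have "continuous_on E (iter_pd [] u)" "continuous_on E (iter_pd [i] u)" "continuous_on E (iter_pd [i, j] u)"
    "\<And>x. x \<in> E \<Longrightarrow> pdifferentiable (iter_pd [] u) i x" "\<And>x. x \<in> E \<Longrightarrow> pdifferentiable (iter_pd [j] u) i x" for i
    using smooth_onD[OF s] by blast+
  then show "C1_on E u" "C1_on E (pdiff j u)" unfolding C1_on_def by auto
qed

lemma Cc_support:
  assumes "u \<in> Cc"
  obtains a where "a > 0" "\<And>x. x \<in> E \<Longrightarrow> (a < \<bar>x $ 1\<bar> \<or> a < x $ 2) \<Longrightarrow> u x = 0"
    "\<And>x j. x \<in> E \<Longrightarrow> (a < \<bar>x $ 1\<bar> \<or> a < x $ 2) \<Longrightarrow> pdiff j u x = 0"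
proof -
  obtain a where a: "a > 0" "\<And>x. x \<in> E \<Longrightarrow> (a \<le> \<bar>x $ 1\<bar> \<or> a \<le> x $ 2) \<Longrightarrow> u x = 0"
    using assms by (force simp: Cc_def)
  define S where "S = E \<inter> ({y. a < y $ 1} \<union> {y. y $ 1 < - a} \<union> {y. a < y $ 2})"
  have "open S" unfolding S_def E_def
    by (intro open_Int open_Un; auto intro!: open_Collect_less continuous_intros)
  moreover have "u y = 0" if "y \<in> S" for y
    using that by (intro a(2)) (auto simp: S_def abs_if)
  ultimately have "pdiff j u x = 0" if "x \<in> E" "a < \<bar>x $ 1\<bar> \<or> a < x $ 2" for x j
    using that by (intro pdiff_eq_0_open(2)[of S]) (auto simp: S_def)
  with a show ?thesis using that by force
qed

section \<open>Integration by parts\<close>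

lemma difference_quotient_LIMSEQ:
  fixes g :: "real \<Rightarrow> 'a::real_normed_vector"
  assumes "(g has_vector_derivative D) (at 0)"
  shows "(\<lambda>n. real (Suc n) *\<^sub>R (g (1 / real (Suc n)) - g 0)) \<longlonglongrightarrow> D"
proof -
  have "((\<lambda>y. norm ((g y - g 0) - y *\<^sub>R D) / norm y) \<longlongrightarrow> 0) (at 0)"
    using assms unfolding has_vector_derivative_def has_derivative_iff_norm by simp
  moreover have "filterlim (\<lambda>n. 1 / real (Suc n)) (at 0) sequentially"
    using LIMSEQ_Suc[OF lim_1_over_n] by (auto simp: filterlim_at)
  ultimately have "(\<lambda>n. norm ((g (1 / real (Suc n)) - g 0) - (1 / real (Suc n)) *\<^sub>R D) / norm (1 / real (Suc n)))
      \<longlonglongrightarrow> 0"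
    by (rule filterlim_compose)
  moreover have "norm ((g (1 / c) - g 0) - (1 / c) *\<^sub>R D) / norm (1 / c)
      = norm (c *\<^sub>R (g (1 / c) - g 0) - D)" if "c > 0" for c :: real
  proof -
    have "norm ((g (1 / c) - g 0) - (1 / c) *\<^sub>R D) / norm (1 / c)
        = norm (c *\<^sub>R ((g (1 / c) - g 0) - (1 / c) *\<^sub>R D))"
      using that by simp
    also have "c *\<^sub>R ((g (1 / c) - g 0) - (1 / c) *\<^sub>R D) = c *\<^sub>R (g (1 / c) - g 0) - D"
      using that by (simp add: scaleR_diff_right)
    finally show ?thesis .
  qed
  ultimately have "(\<lambda>n. norm (real (Suc n) *\<^sub>R (g (1 / real (Suc n)) - g 0) - D)) \<longlonglongrightarrow> 0"
    by (simp del: of_nat_Suc)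
  then show ?thesis
    by (rule LIM_zero_cancel[OF tendsto_norm_zero_cancel])
qed

lemma integrable_lborel_bounded_support:
  fixes f :: "R2 \<Rightarrow> 'b::{banach, second_countable_topology}"
  assumes "continuous_on UNIV f" "\<And>x. R < norm x \<Longrightarrow> f x = 0"
  shows "integrable lborel f"
proof -
  have "integrable lborel (\<lambda>x. indicator (cball 0 R) x *\<^sub>R f x)"
    by (rule borel_integrable_compact) (use assms(1) continuous_on_subset in auto)
  moreover have "(\<lambda>x. indicator (cball 0 R) x *\<^sub>R f x) = f"
    using assms(2) by (auto simp: indicator_def fun_eq_iff not_le)
  ultimately show ?thesis by simp
qed

lemma bounded_support_norm_bound:
  fixes f :: "R2 \<Rightarrow> 'b::real_normed_vector"
  assumes "continuous_on UNIV f" "\<And>x. R < norm x \<Longrightarrow> f x = 0"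
  obtains M where "\<And>x. norm (f x) \<le> M"
proof -
  have "bounded (f ` cball 0 R)"
    by (intro compact_imp_bounded compact_continuous_image) (use assms(1) continuous_on_subset in auto)
  then obtain M where "M > 0" "\<And>x. x \<in> cball 0 R \<Longrightarrow> norm (f x) \<le> M"
    by (auto simp: bounded_pos)
  then show ?thesis
    using assms(2) that by (metis less_imp_le mem_cball_0 norm_zero not_le)
qed

lemma integral_lborel_translate:
  fixes F :: "R2 \<Rightarrow> complex"
  assumes "F \<in> borel_measurable borel"
  shows "integral\<^sup>L lborel (\<lambda>x. F (x + c)) = integral\<^sup>L lborel F"
proof -
  have "integral\<^sup>L lborel F = integral\<^sup>L (distr lborel borel ((+) c)) F"
    by (simp add: lborel_distr_plus)
  also have "\<dots> = integral\<^sup>L lborel (\<lambda>x. F (c + x))"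
    by (rule integral_distr) (simp_all add: assms)
  finally show ?thesis by (simp add: add.commute)
qed

lemma norm_translate_le_pdiff_bound:
  assumes "C1_on UNIV F" "\<And>y. norm (pdiff j F y) \<le> M" "0 < h"
  shows "norm (F (x + h *\<^sub>R ax j) - F x) \<le> h * M"
proof -
  have "((\<lambda>s. F (x + s *\<^sub>R ax j)) has_derivative (\<lambda>s. s *\<^sub>R pdiff j F (x + t *\<^sub>R ax j))) (at t)" for t
    using pdiff_has_vector_derivative_line[OF C1_onD(2)[OF assms(1)]]
    by (simp add: has_vector_derivative_def)
  moreover have "continuous_on {0..h} (\<lambda>s. F (x + s *\<^sub>R ax j))"
    by (intro continuous_on_compose2[OF C1_onD(1)[OF assms(1)]] continuous_intros) auto
  ultimately obtain t where "norm (F (x + h *\<^sub>R ax j) - F x) \<le> norm (h *\<^sub>R pdiff j F (x + t *\<^sub>R ax j))"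
    using mvt_general[OF assms(3)] by fastforce
  also have "\<dots> \<le> h * M"
    using assms(2,3) by (simp add: mult_left_mono)
  finally show ?thesis .
qed

lemma integral_lborel_difference_eq_0:
  fixes F :: cfun
  assumes cF: "continuous_on UNIV F" and supp: "\<And>x. R < norm x \<Longrightarrow> F x = 0"
  shows "integral\<^sup>L lborel (\<lambda>x. c *\<^sub>R (F (x + d) - F x)) = 0"
proof -
  have "F (x + d) = 0" if "R + norm d < norm x" for x
    using that norm_triangle_ineq4[of "x + d" d] by (intro supp) simp
  then have "integrable lborel (\<lambda>x. F (x + d))"
    by (intro integrable_lborel_bounded_support[of _ "R + norm d"] continuous_on_compose2[OF cF])
      (auto intro: continuous_intros)
  then show ?thesis
    using integrable_lborel_bounded_support[OF cF supp]
      integral_lborel_translate[OF borel_measurable_continuous_onI[OF cF]] by simp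
qed

lemma norm_difference_quotient_le:
  assumes C: "C1_on UNIV F" and supp: "\<And>x. R < norm x \<Longrightarrow> F x = 0"
    and M: "\<And>y. norm (pdiff j F y) \<le> M" and "1 \<le> c"
  shows "norm (c *\<^sub>R (F (x + (1 / c) *\<^sub>R ax j) - F x)) \<le> M * indicator (cball 0 (R + 1)) x"
proof (cases "x \<in> cball 0 (R + 1)")
  case True
  have "norm (c *\<^sub>R (F (x + (1 / c) *\<^sub>R ax j) - F x)) = c * norm (F (x + (1 / c) *\<^sub>R ax j) - F x)"
    using \<open>1 \<le> c\<close> by (simp only: norm_scaleR)
  also have "\<dots> \<le> c * (1 / c * M)"
    using \<open>1 \<le> c\<close> by (intro mult_left_mono norm_translate_le_pdiff_bound[OF C M]) simp_all
  also have "\<dots> = M * indicator (cball 0 (R + 1)) x"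
    using True \<open>1 \<le> c\<close> by simp
  finally show ?thesis .
next
  case False
  then have "R + 1 < norm x" by simp
  moreover have "norm x \<le> norm (x + (1 / c) *\<^sub>R ax j) + 1 / c"
    using norm_triangle_ineq4[of "x + (1 / c) *\<^sub>R ax j" "(1 / c) *\<^sub>R ax j"] \<open>1 \<le> c\<close> by simp
  moreover have "1 / c \<le> 1"
    using \<open>1 \<le> c\<close> by simp
  ultimately have "R < norm (x + (1 / c) *\<^sub>R ax j)" "R < norm x"
    by linarith+
  with False show ?thesis by (simp add: supp)
qed

text \<open>The difference quotients have integral zero by translation invariance and
  converge dominatedly by the mean value theorem.\<close>

lemma integral_pdiff_eq_0:
  fixes F :: cfun
  assumes C: "C1_on UNIV F" and supp: "\<And>x. R < norm x \<Longrightarrow> F x = 0"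
  shows "integral\<^sup>L lborel (pdiff j F) = 0"
proof -
  have cF: "continuous_on UNIV F" and cD: "continuous_on UNIV (pdiff j F)"
    using C by (auto simp: C1_on_def)
  have "pdiff j F x = 0" if "R < norm x" for x
    using that supp
    by (intro pdiff_eq_0_open(2)[of "{y. R < norm y}"]) (auto intro!: open_Collect_less continuous_intros)
  then obtain M where M: "\<And>x. norm (pdiff j F x) \<le> M"
    using bounded_support_norm_bound[OF cD] by blast
  define Q where "Q n x = real (Suc n) *\<^sub>R (F (x + (1 / real (Suc n)) *\<^sub>R ax j) - F x)" for n x
  have "(\<lambda>n. integral\<^sup>L lborel (Q n)) \<longlonglongrightarrow> integral\<^sup>L lborel (pdiff j F)"
  proof (rule integral_dominated_convergence[where w="\<lambda>x. M * indicator (cball 0 (R + 1)) x"])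
    show "pdiff j F \<in> borel_measurable lborel" "Q n \<in> borel_measurable lborel" for n
      unfolding Q_def using cD cF
      by (auto simp: measurable_lborel1 intro!: borel_measurable_continuous_onI continuous_intros
          continuous_on_compose2[OF cF])
    have "integrable lborel (\<lambda>x. indicator (cball 0 (R + 1)) x *\<^sub>R M)"
      by (rule borel_integrable_compact) auto
    then show "integrable lborel (\<lambda>x. M * indicator (cball 0 (R + 1)) x)"
      by (simp add: mult.commute)
    show "AE x in lborel. (\<lambda>n. Q n x) \<longlonglongrightarrow> pdiff j F x"
      using difference_quotient_LIMSEQ[OF pdiff_has_vector_derivative[OF C1_onD(2)[OF C]]]
      by (simp add: Q_def)
    show "AE x in lborel. norm (Q n x) \<le> M * indicator (cball 0 (R + 1)) x" for n
      unfolding Q_def by (intro AE_I2 norm_difference_quotient_le[OF C supp M]) simp_all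
  qed
  moreover have "integral\<^sup>L lborel (Q n) = 0" for n
    unfolding Q_def by (rule integral_lborel_difference_eq_0[OF cF supp])
  ultimately show ?thesis
    by (simp add: LIMSEQ_const_iff)
qed

definition zero_ext :: "cfun \<Rightarrow> cfun" where
  "zero_ext f = (\<lambda>x. if x \<in> E then f x else 0)"

lemma continuous_on_zero_ext:
  assumes "continuous_on E f" "\<delta> > 0" "\<And>x. x \<in> E \<Longrightarrow> x $ 2 < \<delta> \<Longrightarrow> f x = 0"
  shows "continuous_on UNIV (zero_ext f)"
proof -
  have "continuous_on (E \<union> {x. x $ 2 < \<delta>}) (zero_ext f)"
  proof (rule continuous_on_open_Un[OF open_E])
    show "continuous_on E (zero_ext f)"
      by (rule continuous_on_eq[OF assms(1)]) (simp add: zero_ext_def)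
    show "continuous_on {x. x $ 2 < \<delta>} (zero_ext f)"
      by (rule continuous_on_eq[OF continuous_on_const[of _ 0]]) (use assms(3) in \<open>auto simp: zero_ext_def\<close>)
  qed (auto intro!: open_Collect_less continuous_intros)
  moreover have "E \<union> {x. x $ 2 < \<delta>} = UNIV"
    using assms(2) by (auto simp: E_def)
  ultimately show ?thesis by simp
qed

lemma integral_lebE_zero_ext:
  assumes "continuous_on E f" "\<delta> > 0" "\<And>x. x \<in> E \<Longrightarrow> x $ 2 < \<delta> \<or> R < norm x \<Longrightarrow> f x = 0"
  shows "integrable lborel (zero_ext f)" "integrable lebE f"
    "integral\<^sup>L lebE f = integral\<^sup>L lborel (zero_ext f)"
proof -
  have c: "continuous_on UNIV (zero_ext f)"
    by (rule continuous_on_zero_ext[OF assms(1,2)]) (use assms(3) in auto)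
  have m: "zero_ext f \<in> borel_measurable lborel"
    using borel_measurable_continuous_onI[OF c] by (simp add: measurable_lborel1)
  have sE: "E \<inter> space lebesgue \<in> sets lebesgue"
    using E_sets_lebesgue by simp
  have eq: "(\<lambda>x. indicator E x *\<^sub>R f x) = zero_ext f"
    by (auto simp: zero_ext_def fun_eq_iff)
  show i: "integrable lborel (zero_ext f)"
    by (rule integrable_lborel_bounded_support[OF c]) (use assms(3) in \<open>auto simp: zero_ext_def\<close>)
  show "integrable lebE f"
    using i unfolding integrable_restrict_space[OF sE] eq
    by (simp add: integrable_completion[OF m[unfolded measurable_lborel1]] measurable_lborel1)
  show "integral\<^sup>L lebE f = integral\<^sup>L lborel (zero_ext f)"
    unfolding integral_restrict_space[OF sE] eq
    by (simp add: integral_completion[OF m[unfolded measurable_lborel1]] measurable_lborel1)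
qed

lemma pdiff_eq_0_outside_support:
  assumes "\<And>y. y $ 2 < \<delta> \<or> R < norm y \<Longrightarrow> f y = 0" "x $ 2 < \<delta> \<or> R < norm x"
  shows "pdiff i f x = 0"
proof (cases "x $ 2 < \<delta>")
  case True
  then show ?thesis
    using assms(1) by (intro pdiff_eq_0_open(2)[of "{y. y $ 2 < \<delta>}"]) (auto intro!: open_Collect_less continuous_intros)
next
  case False
  then show ?thesis
    using assms by (intro pdiff_eq_0_open(2)[of "{y. R < norm y}"]) (auto intro!: open_Collect_less continuous_intros)
qed

lemma C1_on_UNIV_from_E:
  assumes "C1_on E f" "\<delta> > 0" "\<And>x. x $ 2 < \<delta> \<Longrightarrow> f x = 0"
  shows "C1_on UNIV f"
proof -
  have "open {x::R2. x $ 2 < \<delta>}"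
    by (intro open_Collect_less continuous_intros)
  moreover have "C1_on {x. x $ 2 < \<delta>} f"
    using assms(3) by (intro C1_on_cong[OF calculation C1_on_const]) auto
  moreover have "E \<union> {x. x $ 2 < \<delta>} = UNIV"
    using assms(2) by (auto simp: E_def)
  ultimately show ?thesis
    using C1_on_Un[OF open_E _ assms(1)] by metis
qed

lemma integration_by_parts_Cc:
  assumes \<psi>: "\<psi> \<in> Cc" and C: "C1_on UNIV \<beta>" and "\<delta> > 0"
    and supp: "\<And>x. x $ 2 < \<delta> \<or> R < norm x \<Longrightarrow> \<beta> x = 0"
  shows "integrable lebE (\<lambda>x. pdiff j \<psi> x * \<beta> x)" "integrable lebE (\<lambda>x. \<psi> x * pdiff j \<beta> x)"
    "integral\<^sup>L lebE (\<lambda>x. pdiff j \<psi> x * \<beta> x) = - integral\<^sup>L lebE (\<lambda>x. \<psi> x * pdiff j \<beta> x)"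
proof -
  have d\<beta>_0: "pdiff j \<beta> x = 0" if "x $ 2 < \<delta> \<or> R < norm x" for x
    using pdiff_eq_0_outside_support[OF supp that] .
  have \<psi>C: "C1_on E \<psi>" "C1_on E (pdiff j \<psi>)" using Cc_C1_on[OF \<psi>] by auto
  define F where "F x = \<psi> x * \<beta> x" for x
  have CF: "C1_on UNIV F"
    unfolding F_def using \<open>\<delta> > 0\<close> supp
    by (intro C1_on_UNIV_from_E C1_on_mult[OF \<psi>C(1) C1_on_subset[OF C]]) auto
  have pF: "pdiff j F x = zero_ext (\<lambda>x. pdiff j \<psi> x * \<beta> x) x + zero_ext (\<lambda>x. \<psi> x * pdiff j \<beta> x) x" for x
  proof (cases "x \<in> E")
    case True
    then show ?thesis
      unfolding F_def using \<psi>C C by (auto simp: zero_ext_def C1_on_def pdiff_mult(2))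
  next
    case False
    then have "pdiff j F x = 0"
      using \<open>\<delta> > 0\<close> supp by (intro pdiff_eq_0_outside_support[of \<delta> R]) (auto simp: F_def E_def)
    then show ?thesis using False by (simp add: zero_ext_def)
  qed
  have c1: "continuous_on E (\<lambda>x. pdiff j \<psi> x * \<beta> x)" "continuous_on E (\<lambda>x. \<psi> x * pdiff j \<beta> x)"
    using \<psi>C C by (auto simp: C1_on_def intro!: continuous_intros intro: continuous_on_subset)
  note I1 = integral_lebE_zero_ext[OF c1(1) \<open>\<delta> > 0\<close>, of R]
  note I2 = integral_lebE_zero_ext[OF c1(2) \<open>\<delta> > 0\<close>, of R]
  show "integrable lebE (\<lambda>x. pdiff j \<psi> x * \<beta> x)" "integrable lebE (\<lambda>x. \<psi> x * pdiff j \<beta> x)"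
    using I1(2) I2(2) supp d\<beta>_0 by auto
  have "0 = integral\<^sup>L lborel (pdiff j F)"
    using integral_pdiff_eq_0[OF CF, of R] supp by (simp add: F_def)
  also have "\<dots> = integral\<^sup>L lebE (\<lambda>x. pdiff j \<psi> x * \<beta> x) + integral\<^sup>L lebE (\<lambda>x. \<psi> x * pdiff j \<beta> x)"
    unfolding pF using I1 I2 supp d\<beta>_0 by simp
  finally show "integral\<^sup>L lebE (\<lambda>x. pdiff j \<psi> x * \<beta> x) = - integral\<^sup>L lebE (\<lambda>x. \<psi> x * pdiff j \<beta> x)"
    by (simp add: eq_neg_iff_add_eq_0)
qed

section \<open>A smooth cutoff away from the boundary\<close>

definition signed_sq :: "real \<Rightarrow> real" where
  "signed_sq s = s * \<bar>s\<bar>"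

lemma signed_sq_has_real_derivative: "(signed_sq has_real_derivative 2 * \<bar>s\<bar>) (at s)"
proof (cases s "0::real" rule: linorder_cases)
  case less
  have "((\<lambda>y. - (y * y)) has_real_derivative 2 * \<bar>s\<bar>) (at s)"
    using less by (auto intro!: derivative_eq_intros)
  then show ?thesis
    by (rule has_field_derivative_transform_within_open[where S="{..<0}"]) (use less in \<open>auto simp: signed_sq_def\<close>)
next
  case equal
  have "((\<lambda>y::real. \<bar>y\<bar>) \<longlongrightarrow> 0) (at 0)"
    using tendsto_rabs[OF tendsto_ident_at[of 0 UNIV]] by simp
  moreover have "\<forall>y. y \<noteq> 0 \<longrightarrow> (signed_sq y - signed_sq 0) / (y - 0) = \<bar>y\<bar>"
    by (simp add: signed_sq_def)
  ultimately have "((\<lambda>y. (signed_sq y - signed_sq 0) / (y - 0)) \<longlongrightarrow> 0) (at 0)"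
    by (metis (no_types, lifting) LIM_equal)
  then show ?thesis using equal by (simp add: has_field_derivative_iff)
next
  case greater
  have "((\<lambda>y. y * y) has_real_derivative 2 * \<bar>s\<bar>) (at s)"
    using greater by (auto intro!: derivative_eq_intros)
  then show ?thesis
    by (rule has_field_derivative_transform_within_open[where S="{0<..}"]) (use greater in \<open>auto simp: signed_sq_def\<close>)
qed

text \<open>\<open>ramp_sq s = (max 0 (s - 1))\<^sup>2\<close>, written through \<open>signed_sq\<close> so that its
  derivative follows by the chain rule.\<close>

definition ramp_sq :: "real \<Rightarrow> real" where
  "ramp_sq s = (signed_sq (s - 1) + (s - 1)\<^sup>2) / 2"

definition cutoff_profile :: "real \<Rightarrow> real" where
  "cutoff_profile s = ramp_sq s / (1 + ramp_sq s)"

definition cutoff_profile' :: "real \<Rightarrow> real" where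
  "cutoff_profile' s = (\<bar>s - 1\<bar> + (s - 1)) / (1 + ramp_sq s)\<^sup>2"

lemma ramp_sq_eq_0: "s \<le> 1 \<Longrightarrow> ramp_sq s = 0"
  by (auto simp: ramp_sq_def signed_sq_def power2_eq_square abs_if algebra_simps)

lemma ramp_sq_eq: "1 \<le> s \<Longrightarrow> ramp_sq s = (s - 1)\<^sup>2"
  by (auto simp: ramp_sq_def signed_sq_def power2_eq_square abs_if)

lemma ramp_sq_nonneg: "0 \<le> ramp_sq s"
  by (cases "s \<ge> 1") (auto simp: ramp_sq_eq ramp_sq_eq_0)

lemma one_plus_ramp_sq_neq_0 [simp]: "1 + ramp_sq s \<noteq> 0"
  using ramp_sq_nonneg[of s] by simp

lemma continuous_on_ramp_sq: "continuous_on S ramp_sq"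
  unfolding ramp_sq_def[abs_def] signed_sq_def by (intro continuous_intros) auto

lemma ramp_sq_has_real_derivative: "(ramp_sq has_real_derivative (\<bar>s - 1\<bar> + (s - 1))) (at s)"
proof -
  have "((\<lambda>s. (signed_sq (s - 1) + (s - 1)\<^sup>2) / 2) has_real_derivative
      (2 * \<bar>s - 1\<bar> * 1 + 2 * (s - 1)) / 2) (at s)"
    by (intro DERIV_cdivide DERIV_add DERIV_chain2[OF signed_sq_has_real_derivative])
      (auto intro!: derivative_eq_intros)
  then show ?thesis
    unfolding ramp_sq_def[abs_def] by (rule DERIV_cong) simp
qed

lemma cutoff_profile_eq_0: "s \<le> 1 \<Longrightarrow> cutoff_profile s = 0"
  by (simp add: cutoff_profile_def ramp_sq_eq_0)

lemma cutoff_profile_bounds: "0 \<le> cutoff_profile s" "cutoff_profile s \<le> 1"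
  using ramp_sq_nonneg[of s] by (auto simp: cutoff_profile_def)

lemma cutoff_profile_has_real_derivative: "(cutoff_profile has_real_derivative cutoff_profile' s) (at s)"
proof -
  have "((\<lambda>s. ramp_sq s / (1 + ramp_sq s)) has_real_derivative
      ((\<bar>s - 1\<bar> + (s - 1)) * (1 + ramp_sq s) - ramp_sq s * (0 + (\<bar>s - 1\<bar> + (s - 1))))
        / ((1 + ramp_sq s) * (1 + ramp_sq s))) (at s)"
    by (intro DERIV_divide DERIV_add DERIV_const ramp_sq_has_real_derivative) simp
  then show ?thesis
    unfolding cutoff_profile_def[abs_def] cutoff_profile'_def by (simp add: algebra_simps power2_eq_square)
qed

lemma cutoff_profile_tendsto: "(cutoff_profile \<longlongrightarrow> 1) at_top"
proof -
  have "\<forall>\<^sub>F s in at_top. (s - 1)\<^sup>2 / (1 + (s - 1)\<^sup>2) = cutoff_profile s"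
    using eventually_ge_at_top[of "1::real"] by eventually_elim (simp add: cutoff_profile_def ramp_sq_eq)
  moreover have "((\<lambda>s::real. (s - 1)\<^sup>2 / (1 + (s - 1)\<^sup>2)) \<longlongrightarrow> 1) at_top"
    by real_asymp
  ultimately show ?thesis
    by (rule Lim_transform_eventually[rotated])
qed

definition cutoff :: "real \<Rightarrow> R2 \<Rightarrow> complex" where
  "cutoff c x = complex_of_real (cutoff_profile (c * x $ 2))"

lemma cutoff_eq_0: assumes "0 < c" "x $ 2 < 1 / c" shows "cutoff c x = 0"
  using assms by (simp add: cutoff_def cutoff_profile_eq_0 field_simps)

lemma norm_cutoff_le_1: "cmod (cutoff c x) \<le> 1"
  using cutoff_profile_bounds[of "c * x $ 2"] by (simp add: cutoff_def)

lemma cutoff_LIMSEQ: assumes "0 < x $ 2" shows "(\<lambda>k. cutoff (real (Suc k)) x) \<longlonglongrightarrow> 1"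
proof -
  have "filterlim (\<lambda>k. real (Suc k) * x $ 2) at_top sequentially"
    using assms by real_asymp
  from tendsto_of_real[OF filterlim_compose[OF cutoff_profile_tendsto this]]
  show ?thesis by (simp add: cutoff_def)
qed

lemma C1_on_cutoff: "C1_on S (cutoff c)"
proof -
  have "((\<lambda>t. cutoff c (x + t *\<^sub>R ax i)) has_vector_derivative
      complex_of_real (cutoff_profile' (c * x $ 2) * (c * ax i $ 2))) (at 0)" for i x
  proof -
    have "((\<lambda>t. c * (x + t *\<^sub>R ax i) $ 2) has_real_derivative c * ax i $ 2) (at 0)"
      by (auto intro!: derivative_eq_intros)
    from has_vector_derivative_of_real[OF DERIV_chain2[OF cutoff_profile_has_real_derivative this]]
    show ?thesis by (simp add: cutoff_def)
  qed
  note d = pdiff_eqI[OF this]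
  have "continuous_on S (cutoff c)"
    unfolding cutoff_def[abs_def] cutoff_profile_def
    by (intro continuous_intros continuous_on_compose2[OF continuous_on_ramp_sq[of UNIV]]) auto
  moreover have "continuous_on S (\<lambda>x. complex_of_real (cutoff_profile' (c * x $ 2) * (c * ax i $ 2)))" for i
    unfolding cutoff_profile'_def
    by (intro continuous_intros continuous_on_compose2[OF continuous_on_ramp_sq[of UNIV]]) auto
  ultimately show ?thesis
    unfolding C1_on_def using d by (simp add: fun_eq_iff[symmetric])
qed

section \<open>Closability of first-order operators\<close>

definition first_order_op :: "cfun \<Rightarrow> cfun \<Rightarrow> cfun \<Rightarrow> cfun \<Rightarrow> cfun" where
  "first_order_op a1 a2 g \<psi> x = a1 x * pdiff 1 \<psi> x + a2 x * pdiff 2 \<psi> x + g x * \<psi> x"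

text \<open>The formal adjoint is written with \<open>cnj\<close> so that
  \<open>ip (first_order_op a1 a2 g \<psi>) \<eta> = ip \<psi> (formal_adjoint a1 a2 g \<eta>)\<close> is literally
  integration by parts of \<open>pdiff j \<psi> * (a\<^sub>j * cnj \<eta>)\<close>.\<close>

definition formal_adjoint :: "cfun \<Rightarrow> cfun \<Rightarrow> cfun \<Rightarrow> cfun \<Rightarrow> cfun" where
  "formal_adjoint a1 a2 g \<eta> x =
     cnj (- pdiff 1 (\<lambda>y. a1 y * cnj (\<eta> y)) x - pdiff 2 (\<lambda>y. a2 y * cnj (\<eta> y)) x + g x * cnj (\<eta> x))"

definition test_fn :: "cfun \<Rightarrow> real \<Rightarrow> real \<Rightarrow> bool" where
  "test_fn \<eta> \<delta> R \<longleftrightarrow> C1_on UNIV \<eta> \<and> \<delta> > 0 \<and> (\<forall>x. x $ 2 < \<delta> \<or> R < norm x \<longrightarrow> \<eta> x = 0)"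

lemma test_fn_mult_cnj:
  assumes "C1_on UNIV a" "test_fn \<eta> \<delta> R" shows "test_fn (\<lambda>y. a y * cnj (\<eta> y)) \<delta> R"
  using assms unfolding test_fn_def by (auto intro!: C1_on_mult C1_on_cnj)

lemma L2_vanishing_outside:
  assumes "continuous_on E f" "\<delta> > 0" "\<And>x. x \<in> E \<Longrightarrow> x $ 2 < \<delta> \<or> R < norm x \<Longrightarrow> f x = 0"
  shows "L2 f"
  unfolding L2_def
proof
  show "f \<in> borel_measurable lebE"
    by (rule continuous_on_borel_measurable_lebE[OF assms(1)])
  have "integrable lebE (\<lambda>x. complex_of_real ((cmod (f x))\<^sup>2))"
    by (rule integral_lebE_zero_ext(2)[OF _ assms(2)]) (use assms in \<open>auto intro!: continuous_intros\<close>)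
  then show "integrable lebE (\<lambda>x. (cmod (f x))\<^sup>2)"
    by (simp only: complex_of_real_integrable_eq)
qed

lemma test_fn_L2: "test_fn \<eta> \<delta> R \<Longrightarrow> L2 \<eta>"
  by (rule L2_vanishing_outside[of _ \<delta> R]) (auto simp: test_fn_def C1_on_def intro: continuous_on_subset)

lemma formal_adjoint_L2:
  assumes "C1_on UNIV a1" "C1_on UNIV a2" "continuous_on UNIV g" and \<eta>: "test_fn \<eta> \<delta> R"
  shows "L2 (formal_adjoint a1 a2 g \<eta>)"
proof -
  have t: "test_fn (\<lambda>y. a1 y * cnj (\<eta> y)) \<delta> R" "test_fn (\<lambda>y. a2 y * cnj (\<eta> y)) \<delta> R"
    using test_fn_mult_cnj assms by auto
  show ?thesis
  proof (rule L2_vanishing_outside[of _ \<delta> R])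
    show "continuous_on E (formal_adjoint a1 a2 g \<eta>)"
      using t \<eta> assms(3) unfolding formal_adjoint_def[abs_def] test_fn_def C1_on_def
      by (intro continuous_intros; auto intro: continuous_on_subset)
    show "formal_adjoint a1 a2 g \<eta> x = 0" if "x $ 2 < \<delta> \<or> R < norm x" for x
    proof -
      have "pdiff 1 (\<lambda>y. a1 y * cnj (\<eta> y)) x = 0" "pdiff 2 (\<lambda>y. a2 y * cnj (\<eta> y)) x = 0" "\<eta> x = 0"
        using t \<eta> that by (auto simp: test_fn_def intro!: pdiff_eq_0_outside_support[of \<delta> R])
      then show ?thesis by (simp add: formal_adjoint_def)
    qed
  qed (use \<eta> in \<open>simp add: test_fn_def\<close>)
qed

lemma ip_first_order_op_eq_adjoint:
  assumes a1: "C1_on UNIV a1" and a2: "C1_on UNIV a2" and g: "continuous_on UNIV g"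
    and \<eta>: "test_fn \<eta> \<delta> R" and \<psi>: "\<psi> \<in> Cc"
  shows "ip (first_order_op a1 a2 g \<psi>) \<eta> = ip \<psi> (formal_adjoint a1 a2 g \<eta>)"
proof -
  define \<beta>1 where "\<beta>1 y = a1 y * cnj (\<eta> y)" for y
  define \<beta>2 where "\<beta>2 y = a2 y * cnj (\<eta> y)" for y
  have "test_fn \<beta>1 \<delta> R" "test_fn \<beta>2 \<delta> R"
    unfolding \<beta>1_def[abs_def] \<beta>2_def[abs_def] using test_fn_mult_cnj[OF _ \<eta>] a1 a2 by auto
  then have \<delta>: "\<delta> > 0" and \<beta>: "C1_on UNIV \<beta>1" "C1_on UNIV \<beta>2"
    and supp: "\<And>x. x $ 2 < \<delta> \<or> R < norm x \<Longrightarrow> \<beta>1 x = 0" "\<And>x. x $ 2 < \<delta> \<or> R < norm x \<Longrightarrow> \<beta>2 x = 0"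
    by (auto simp: test_fn_def)
  note I1 = integration_by_parts_Cc[OF \<psi> \<beta>(1) \<delta> supp(1), where j=1]
  note I2 = integration_by_parts_Cc[OF \<psi> \<beta>(2) \<delta> supp(2), where j=2]
  have I3: "integrable lebE (\<lambda>x. \<psi> x * (g x * cnj (\<eta> x)))"
    using Cc_C1_on(1)[OF \<psi>] g \<eta> \<delta> unfolding test_fn_def C1_on_def
    by (intro integral_lebE_zero_ext(2)[of _ \<delta> R]) (auto intro!: continuous_intros intro: continuous_on_subset)
  have "ip (first_order_op a1 a2 g \<psi>) \<eta>
      = integral\<^sup>L lebE (\<lambda>x. pdiff 1 \<psi> x * \<beta>1 x) + integral\<^sup>L lebE (\<lambda>x. pdiff 2 \<psi> x * \<beta>2 x)
        + integral\<^sup>L lebE (\<lambda>x. \<psi> x * (g x * cnj (\<eta> x)))"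
    using I1 I2 I3 unfolding ip_def first_order_op_def \<beta>1_def \<beta>2_def by (simp add: algebra_simps)
  also have "\<dots> = - integral\<^sup>L lebE (\<lambda>x. \<psi> x * pdiff 1 \<beta>1 x) - integral\<^sup>L lebE (\<lambda>x. \<psi> x * pdiff 2 \<beta>2 x)
        + integral\<^sup>L lebE (\<lambda>x. \<psi> x * (g x * cnj (\<eta> x)))"
    using I1(3) I2(3) by simp
  also have "\<dots> = ip \<psi> (formal_adjoint a1 a2 g \<eta>)"
    using I1 I2 I3 unfolding ip_def formal_adjoint_def \<beta>1_def[abs_def] \<beta>2_def[abs_def]
    by (simp add: algebra_simps)
  finally show ?thesis .
qed

lemma ip_limit_eq_adjoint:
  assumes "C1_on UNIV a1" "C1_on UNIV a2" "continuous_on UNIV g" "test_fn \<eta> \<delta> R"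
    and "\<And>n. \<psi>s n \<in> Cc" "L2_conv \<psi>s u" "L2_conv (\<lambda>n. first_order_op a1 a2 g (\<psi>s n)) v"
  shows "ip v \<eta> = ip u (formal_adjoint a1 a2 g \<eta>)"
proof (rule LIMSEQ_unique)
  show "(\<lambda>n. ip (first_order_op a1 a2 g (\<psi>s n)) \<eta>) \<longlonglongrightarrow> ip v \<eta>"
    by (rule ip_tendsto_left[OF assms(7) test_fn_L2[OF assms(4)]])
  show "(\<lambda>n. ip (first_order_op a1 a2 g (\<psi>s n)) \<eta>) \<longlonglongrightarrow> ip u (formal_adjoint a1 a2 g \<eta>)"
    unfolding ip_first_order_op_eq_adjoint[OF assms(1-4,5)]
    by (rule ip_tendsto_left[OF assms(6) formal_adjoint_L2[OF assms(1-4)]])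
qed

lemma C1_on_first_order_op:
  assumes "C1_on UNIV a1" "C1_on UNIV a2" "C1_on UNIV g" "\<psi> \<in> Cc"
  shows "C1_on E (first_order_op a1 a2 g \<psi>)"
  using assms Cc_C1_on[OF assms(4)] unfolding first_order_op_def[abs_def]
  by (intro C1_on_add C1_on_mult; auto intro: C1_on_subset)

lemma test_fn_cutoff_first_order_op:
  assumes "C1_on UNIV a1" "C1_on UNIV a2" "C1_on UNIV g" "\<psi> \<in> Cc"
  obtains R where "\<And>k. test_fn (\<lambda>x. cutoff (real (Suc k)) x * first_order_op a1 a2 g \<psi> x) (1 / real (Suc k)) R"
proof -
  obtain a where "a > 0" and supp: "\<And>x. x \<in> E \<Longrightarrow> (a < \<bar>x $ 1\<bar> \<or> a < x $ 2) \<Longrightarrow> first_order_op a1 a2 g \<psi> x = 0"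
    using Cc_support[OF assms(4)] unfolding first_order_op_def by (metis mult_zero_right add_0)
  have "test_fn (\<lambda>x. cutoff c x * first_order_op a1 a2 g \<psi> x) (1 / c) (2 * a)" if "c > 0" for c
    unfolding test_fn_def
  proof (intro conjI allI impI)
    show "C1_on UNIV (\<lambda>x. cutoff c x * first_order_op a1 a2 g \<psi> x)"
      using that cutoff_eq_0[OF that]
      by (intro C1_on_UNIV_from_E[of _ "1 / c"] C1_on_mult C1_on_cutoff C1_on_first_order_op assms) auto
    fix x :: R2 assume x: "x $ 2 < 1 / c \<or> 2 * a < norm x"
    show "cutoff c x * first_order_op a1 a2 g \<psi> x = 0"
    proof (cases "x $ 2 < 1 / c")
      case True
      then show ?thesis by (simp add: cutoff_eq_0[OF that])
    next
      case False
      moreover have "norm x \<le> \<bar>x $ 1\<bar> + \<bar>x $ 2\<bar>"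
        using norm_le_l1_cart[of x] by (simp add: sum_2)
      moreover have "0 < 1 / c" using that by simp
      ultimately have "0 < x $ 2" "a < \<bar>x $ 1\<bar> \<or> a < x $ 2"
        using x by linarith+
      then have "x \<in> E" "a < \<bar>x $ 1\<bar> \<or> a < x $ 2"
        by (auto simp: E_def)
      then show ?thesis by (simp add: supp)
    qed
  qed (use that in simp)
  then show ?thesis using that[of "2 * a"] by (simp del: of_nat_Suc)
qed

lemma ip_cutoff_tendsto:
  assumes "L2 v" "L2 f"
  shows "(\<lambda>k. ip v (\<lambda>x. cutoff (real (Suc k)) x * f x)) \<longlonglongrightarrow> ip v f"
  unfolding ip_def
proof (rule integral_dominated_convergence[where w="\<lambda>x. cmod (v x) * cmod (f x)"])
  have "cutoff c \<in> borel_measurable lebE" for c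
    using C1_on_cutoff[of E c] by (simp add: C1_on_def continuous_on_borel_measurable_lebE)
  then show "(\<lambda>x. v x * cnj (f x)) \<in> borel_measurable lebE"
    "(\<lambda>x. v x * cnj (cutoff (real (Suc k)) x * f x)) \<in> borel_measurable lebE" for k
    using assms by (auto simp: L2_def)
  show "integrable lebE (\<lambda>x. cmod (v x) * cmod (f x))"
    by (rule integrable_norm_mult[OF assms])
  show "AE x in lebE. (\<lambda>k. v x * cnj (cutoff (real (Suc k)) x * f x)) \<longlonglongrightarrow> v x * cnj (f x)"
    using cutoff_LIMSEQ by (intro AE_I2) (auto simp: E_def intro!: tendsto_eq_intros)
  show "AE x in lebE. norm (v x * cnj (cutoff (real (Suc k)) x * f x)) \<le> cmod (v x) * cmod (f x)" for k
    using norm_cutoff_le_1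
    by (intro AE_I2) (simp add: norm_mult mult_left_mono mult_left_le_one_le)
qed

lemma ip_eq_0_LIMSEQ:
  assumes "L2_conv \<phi> u" "L2 g" "\<And>n. ip g (\<phi> n) = 0"
  shows "ip g u = 0"
  using ip_tendsto_right[OF assms(1,2)] assms(3) by (simp add: LIMSEQ_const_iff)

lemma first_order_op_closable:
  assumes a: "C1_on UNIV a1" "C1_on UNIV a2" "C1_on UNIV g"
    and \<psi>: "\<And>n. \<psi>s n \<in> Cc" "L2_conv \<psi>s u" "L2_conv (\<lambda>n. first_order_op a1 a2 g (\<psi>s n)) v"
    and \<phi>: "\<And>n. \<phi>s n \<in> Cc" "L2_conv \<phi>s u" "L2_conv (\<lambda>n. first_order_op a1 a2 g (\<phi>s n)) v'"
  shows "nrm (\<lambda>x. v x - v' x) = 0"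
proof -
  define Y where "Y = first_order_op a1 a2 g"
  define w where "w x = v x - v' x" for x
  have L: "L2 v" "L2 v'" "L2 w"
    using \<psi>(3) \<phi>(3) L2_diff unfolding w_def by (auto simp: L2_conv_def)
  have "continuous_on UNIV g" using a(3) by (simp add: C1_on_def)
  then have w_test: "ip w \<eta> = 0" if "test_fn \<eta> \<delta> R" for \<eta> \<delta> R
    using ip_limit_eq_adjoint[OF a(1,2) _ that \<psi>] ip_limit_eq_adjoint[OF a(1,2) _ that \<phi>]
      test_fn_L2[OF that] L unfolding w_def by (simp add: ip_diff_left)
  have w_range: "ip w (Y \<theta>) = 0" if \<theta>: "\<theta> \<in> Cc" "L2 (Y \<theta>)" for \<theta>
  proof -
    obtain R where R: "\<And>k. test_fn (\<lambda>x. cutoff (real (Suc k)) x * Y \<theta> x) (1 / real (Suc k)) R"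
      using test_fn_cutoff_first_order_op[OF a \<theta>(1)] unfolding Y_def by blast
    then have "(\<lambda>k. ip w (\<lambda>x. cutoff (real (Suc k)) x * Y \<theta> x)) = (\<lambda>k. 0)"
      by (intro ext w_test)
    then show ?thesis
      using ip_cutoff_tendsto[OF L(3) \<theta>(2)] by (simp add: LIMSEQ_const_iff)
  qed
  have "ip w v = 0"
    using w_range[OF \<psi>(1) L2_convD(2)[OF \<psi>(3)[folded Y_def]]] by (intro ip_eq_0_LIMSEQ[OF \<psi>(3)[folded Y_def] L(3)])
  moreover have "ip w v' = 0"
    using w_range[OF \<phi>(1) L2_convD(2)[OF \<phi>(3)[folded Y_def]]] by (intro ip_eq_0_LIMSEQ[OF \<phi>(3)[folded Y_def] L(3)])
  moreover have "ip w w = ip w v - ip w v'"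
    using L by (simp add: w_def[abs_def] ip_diff_right)
  ultimately have "ip w w = 0" by simp
  then show ?thesis
    unfolding w_def by (simp add: ip_self)
qed

section \<open>Relative bounds with respect to \<open>h\<^sub>b\<^sup>E\<close>\<close>

lemma L2_conv_add:
  assumes "L2_conv \<phi> u" "L2_conv \<psi> v"
  shows "L2_conv (\<lambda>n x. \<phi> n x + \<psi> n x) (\<lambda>x. u x + v x)"
proof -
  have L: "\<And>n. L2 (\<phi> n)" "\<And>n. L2 (\<psi> n)" "L2 u" "L2 v"
    and lim: "(\<lambda>n. nrm (\<lambda>x. \<phi> n x - u x)) \<longlonglongrightarrow> 0" "(\<lambda>n. nrm (\<lambda>x. \<psi> n x - v x)) \<longlonglongrightarrow> 0"
    using assms by (auto simp: L2_conv_def)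
  have "(\<lambda>x. (\<phi> n x + \<psi> n x) - (u x + v x)) = (\<lambda>x. (\<phi> n x - u x) + (\<psi> n x - v x))" for n
    by (simp add: fun_eq_iff)
  then have "nrm (\<lambda>x. (\<phi> n x + \<psi> n x) - (u x + v x)) \<le> nrm (\<lambda>x. \<phi> n x - u x) + nrm (\<lambda>x. \<psi> n x - v x)" for n
    using nrm_triangle[OF L2_diff[OF L(1,3)] L2_diff[OF L(2,4)], of n n] by simp
  then have "(\<lambda>n. nrm (\<lambda>x. (\<phi> n x + \<psi> n x) - (u x + v x))) \<longlonglongrightarrow> 0"
    by (intro Lim_null_comparison[OF _ tendsto_add_zero[OF lim]] always_eventually) (simp add: nrm_nonneg)
  then show ?thesis
    using L by (simp add: L2_conv_def L2_add)
qed

lemma L2_conv_mult_bounded: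
  assumes "L2_conv \<phi> u" "h \<in> borel_measurable lebE" "\<And>x. cmod (h x) \<le> B"
  shows "L2_conv (\<lambda>n x. h x * \<phi> n x) (\<lambda>x. h x * u x)"
proof -
  have L: "\<And>n. L2 (\<phi> n)" "L2 u" and lim: "(\<lambda>n. nrm (\<lambda>x. \<phi> n x - u x)) \<longlonglongrightarrow> 0"
    using assms by (auto simp: L2_conv_def)
  have B: "0 \<le> B" using assms(3) norm_ge_zero order_trans by blast
  have "nrm (\<lambda>x. h x * \<phi> n x - h x * u x) \<le> B * nrm (\<lambda>x. \<phi> n x - u x)" for n
    using nrm_mult_le[OF L2_diff[OF L] assms(2) assms(3) B] by (simp add: right_diff_distrib)
  then have "(\<lambda>n. nrm (\<lambda>x. h x * \<phi> n x - h x * u x)) \<longlonglongrightarrow> 0"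
    by (intro Lim_null_comparison[OF _ tendsto_mult_right_zero[OF lim, of B]] always_eventually) (simp add: nrm_nonneg)
  moreover have "L2 (\<lambda>x. h x * \<phi> n x)" for n
    using L2_mult_bounded[OF L(1) assms(2,3)] .
  ultimately show ?thesis
    using L2_mult_bounded[OF L(2) assms(2,3)] by (simp add: L2_conv_def)
qed

definition C1_bounded :: "cfun \<Rightarrow> bool" where
  "C1_bounded f \<longleftrightarrow> C1_on UNIV f \<and> (\<exists>M. \<forall>x. cmod (f x) \<le> M)"

lemma C1_boundedE:
  assumes "C1_bounded f"
  obtains M where "0 \<le> M" "\<And>x. cmod (f x) \<le> M" "f \<in> borel_measurable lebE"
proof -
  obtain M where M: "\<And>x. cmod (f x) \<le> M" and "C1_on UNIV f"
    using assms unfolding C1_bounded_def by blast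
  then have "f \<in> borel_measurable lebE"
    by (intro continuous_on_borel_measurable_lebE) (auto intro: continuous_on_subset simp: C1_on_def)
  with M show ?thesis
    using that order_trans[OF norm_ge_zero M] by blast
qed

lemma C1_bounded_const: "C1_bounded (\<lambda>x. c)"
  unfolding C1_bounded_def by (auto intro: C1_on_const)

lemma C1_bounded_add:
  assumes "C1_bounded f" "C1_bounded g" shows "C1_bounded (\<lambda>x. f x + g x)"
proof -
  obtain M1 M2 where M: "\<And>x. cmod (f x) \<le> M1" "\<And>x. cmod (g x) \<le> M2"
    using assms by (auto simp: C1_bounded_def)
  have "cmod (f x + g x) \<le> M1 + M2" for x
    using norm_triangle_ineq[of "f x" "g x"] M[of x] by linarith
  then show ?thesis
    using assms unfolding C1_bounded_def by (auto intro: C1_on_add)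
qed

lemma C1_bounded_mult:
  assumes "C1_bounded f" "C1_bounded g" shows "C1_bounded (\<lambda>x. f x * g x)"
proof -
  obtain M1 M2 where M: "\<And>x. cmod (f x) \<le> M1" "\<And>x. cmod (g x) \<le> M2"
    using assms by (auto simp: C1_bounded_def)
  have "cmod (f x * g x) \<le> M1 * M2" for x
    unfolding norm_mult by (intro mult_mono M norm_ge_zero order_trans[OF norm_ge_zero M(1)])
  then show ?thesis
    using assms unfolding C1_bounded_def by (auto intro: C1_on_mult)
qed

lemma C1_bounded_diff:
  assumes "C1_bounded f" "C1_bounded g" shows "C1_bounded (\<lambda>x. f x - g x)"
  using C1_bounded_add[OF assms(1) C1_bounded_mult[OF C1_bounded_const assms(2)], of "-1"]
  by simp

lemma C1_bounded_of_real_iter_pd: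
  fixes g :: "R2 \<Rightarrow> real"
  assumes "BC_inf g"
  shows "C1_bounded (\<lambda>y. complex_of_real (iter_pd ks g y))"
proof -
  obtain M where "\<And>y. \<bar>iter_pd ks g y\<bar> \<le> M"
    using assms unfolding BC_inf_def bounded_iff by auto
  then show ?thesis
    using C1_on_of_real_iter_pd assms unfolding C1_bounded_def BC_inf_def by auto
qed

lemma h_graph_gradients:
  assumes "h_graph b u f"
  obtains g1 g2 where "form_dom b u g1 g2" "complex_of_real ((nrm g1)\<^sup>2 + (nrm g2)\<^sup>2) = ip f u"
    "L2 f" "L2 u" "L2 g1" "L2 g2"
proof -
  obtain g1 g2 where "L2 f" and fd: "form_dom b u g1 g2"
    and "\<forall>v k1 k2. form_dom b v k1 k2 \<longrightarrow> ip g1 k1 + ip g2 k2 = ip f v"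
    using assms unfolding h_graph_def by blast
  moreover from this have "ip g1 g1 + ip g2 g2 = ip f u" by blast
  moreover have "L2 u" "L2 g1" "L2 g2" using fd unfolding form_dom_def L2_conv_def by auto
  ultimately show ?thesis using that by (simp add: ip_self)
qed

lemma nrm_resolvent_sq:
  assumes "L2 f" "L2 u" "complex_of_real G = ip f u"
  shows "(nrm (\<lambda>x. f x + complex_of_real lam * u x))\<^sup>2 = (nrm f)\<^sup>2 + 2 * lam * G + lam\<^sup>2 * (nrm u)\<^sup>2"
proof -
  have Lu: "L2 (\<lambda>x. complex_of_real lam * u x)" by (rule L2_cmult[OF assms(2)])
  have "ip (\<lambda>x. f x + complex_of_real lam * u x) (\<lambda>x. f x + complex_of_real lam * u x)
     = ip f f + ip f (\<lambda>x. complex_of_real lam * u x)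
       + (ip (\<lambda>x. complex_of_real lam * u x) f + ip (\<lambda>x. complex_of_real lam * u x) (\<lambda>x. complex_of_real lam * u x))"
    using assms(1) Lu by (simp add: ip_add_left ip_add_right L2_add)
  also have "\<dots> = ip f f + complex_of_real lam * ip f u + complex_of_real lam * cnj (ip f u)
      + complex_of_real (lam\<^sup>2) * ip u u"
    by (simp add: ip_cmult_left ip_cmult_right ip_commute[of u f] power2_eq_square)
  finally have "Re (ip (\<lambda>x. f x + complex_of_real lam * u x) (\<lambda>x. f x + complex_of_real lam * u x))
      = Re (ip f f) + lam * G + lam * G + lam\<^sup>2 * Re (ip u u)"
    using assms(3)[symmetric] by simp
  then show ?thesis by (simp add: ip_self)
qed

lemma resolvent_estimate:
  fixes q F G1 G2 U lam :: real
  assumes "q\<^sup>2 = F\<^sup>2 + 2 * lam * (G1\<^sup>2 + G2\<^sup>2) + lam\<^sup>2 * U\<^sup>2" "0 \<le> q" "0 < lam"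
  shows "G1 + G2 + U \<le> 3 * sqrt (1 + lam) / lam * q"
proof -
  define s where "s = sqrt (1 + lam) / lam"
  have "0 \<le> F\<^sup>2" "0 \<le> lam * G1\<^sup>2" "0 \<le> lam * G2\<^sup>2" "0 \<le> lam\<^sup>2 * U\<^sup>2"
    and "2 * lam * (G1\<^sup>2 + G2\<^sup>2) = 2 * (lam * G1\<^sup>2) + 2 * (lam * G2\<^sup>2)"
    and "(lam * U)\<^sup>2 = lam\<^sup>2 * U\<^sup>2" "(sqrt lam * G1)\<^sup>2 = lam * G1\<^sup>2" "(sqrt lam * G2)\<^sup>2 = lam * G2\<^sup>2"
    using assms(3) by (simp_all add: algebra_simps power_mult_distrib)
  then have "(lam * U)\<^sup>2 \<le> q\<^sup>2" "(sqrt lam * G1)\<^sup>2 \<le> q\<^sup>2" "(sqrt lam * G2)\<^sup>2 \<le> q\<^sup>2"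
    using assms(1) by linarith+
  then have "lam * U \<le> q" "sqrt lam * G1 \<le> q" "sqrt lam * G2 \<le> q"
    using power2_le_imp_le assms(2) by blast+
  then have "U \<le> q / lam" "G1 \<le> q / sqrt lam" "G2 \<le> q / sqrt lam"
    using assms(3) by (simp_all add: field_simps)
  moreover have "1 / sqrt lam = sqrt lam / lam"
    using assms(3) by (simp add: field_simps)
  then have "1 / sqrt lam \<le> s" "1 / lam \<le> s"
    using assms(3) unfolding s_def by (auto intro!: divide_right_mono)
  then have "q / sqrt lam \<le> q * s" "q / lam \<le> q * s"
    using mult_left_mono[OF _ assms(2)] by fastforce+
  ultimately have "G1 + G2 + U \<le> 3 * (q * s)"
    by linarith
  then show ?thesis
    unfolding s_def by (simp add: field_simps)
qed

lemma infinitesimal_estimate: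
  fixes F U G1 G2 t :: real
  assumes "G1\<^sup>2 + G2\<^sup>2 \<le> F * U" "0 \<le> F" "0 \<le> U" "0 < t"
  shows "G1 + G2 \<le> t * F + U / t"
proof -
  have "((t * F + U / t) / 2)\<^sup>2 - F * U = (t * F - U / t)\<^sup>2 / 4"
    using assms(4) by (simp add: power2_eq_square field_simps)
  then have "F * U \<le> ((t * F + U / t) / 2)\<^sup>2"
    by (smt (verit) zero_le_power2 divide_nonneg_pos)
  then have "G1\<^sup>2 \<le> ((t * F + U / t) / 2)\<^sup>2" "G2\<^sup>2 \<le> ((t * F + U / t) / 2)\<^sup>2"
    using assms(1) zero_le_power2[of G1] zero_le_power2[of G2] by linarith+
  moreover have "0 \<le> (t * F + U / t) / 2"
    using assms(2-4) by simp
  ultimately have "G1 \<le> (t * F + U / t) / 2" "G2 \<le> (t * F + U / t) / 2"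
    using power2_le_imp_le by blast+
  then show ?thesis by simp
qed

lemma nrm_gradients_resolvent_le:
  assumes "L2 f" "L2 u" "complex_of_real ((nrm g1)\<^sup>2 + (nrm g2)\<^sup>2) = ip f u" "0 < lam"
  shows "nrm g1 + nrm g2 + nrm u \<le> 3 * sqrt (1 + lam) / lam * nrm (\<lambda>x. f x + complex_of_real lam * u x)"
  using nrm_resolvent_sq[OF assms(1-3), of lam] nrm_nonneg assms(4) by (intro resolvent_estimate) simp_all

lemma nrm_gradients_le:
  assumes "L2 f" "L2 u" "complex_of_real ((nrm g1)\<^sup>2 + (nrm g2)\<^sup>2) = ip f u" "0 < t"
  shows "nrm g1 + nrm g2 \<le> t * nrm f + nrm u / t"
proof -
  have "(nrm g1)\<^sup>2 + (nrm g2)\<^sup>2 \<le> cmod (ip f u)"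
    using complex_Re_le_cmod[of "ip f u"] assms(3)[symmetric] by simp
  also have "\<dots> \<le> nrm f * nrm u"
    by (rule ip_Cauchy_Schwarz[OF assms(1,2)])
  finally show ?thesis
    using assms(4) by (intro infinitesimal_estimate) (simp_all add: nrm_nonneg)
qed

definition h_relatively_bounded :: "real \<Rightarrow> (cfun \<Rightarrow> cfun) \<Rightarrow> bool" where
  "h_relatively_bounded b Y \<longleftrightarrow>
     (\<forall>u f. h_graph b u f \<longrightarrow> (\<exists>v. clos_graph Y u v))
     \<and> (\<exists>C. \<forall>lam>0. \<forall>u f v. h_graph b u f \<longrightarrow> clos_graph Y u v \<longrightarrow>
           nrm v \<le> C * sqrt (1 + lam) / lam * nrm (\<lambda>x. f x + complex_of_real lam * u x))
     \<and> (\<forall>\<epsilon>>0. \<exists>C\<^sub>\<epsilon>. \<forall>u f v. h_graph b u f \<longrightarrow> clos_graph Y u v \<longrightarrow>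
           nrm v \<le> \<epsilon> * nrm f + C\<^sub>\<epsilon> * nrm u)"

lemma h_relatively_boundedI:
  assumes K: "0 < K"
    and dom: "\<And>u f. h_graph b u f \<Longrightarrow> \<exists>v. clos_graph Y u v"
    and bound: "\<And>u f v. h_graph b u f \<Longrightarrow> clos_graph Y u v \<Longrightarrow> \<exists>g1 g2. L2 f \<and> L2 u
        \<and> complex_of_real ((nrm g1)\<^sup>2 + (nrm g2)\<^sup>2) = ip f u \<and> nrm v \<le> K * (nrm g1 + nrm g2 + nrm u)"
  shows "h_relatively_bounded b Y"
  unfolding h_relatively_bounded_def
proof (intro conjI)
  show "\<forall>u f. h_graph b u f \<longrightarrow> (\<exists>v. clos_graph Y u v)"
    using dom by blast
next
  show "\<exists>C. \<forall>lam>0. \<forall>u f v. h_graph b u f \<longrightarrow> clos_graph Y u v \<longrightarrow>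
      nrm v \<le> C * sqrt (1 + lam) / lam * nrm (\<lambda>x. f x + complex_of_real lam * u x)"
  proof (intro exI[of _ "3 * K"] allI impI)
    fix lam :: real and u f v
    assume "0 < lam" "h_graph b u f" "clos_graph Y u v"
    then obtain g1 g2 where "L2 f" "L2 u" "complex_of_real ((nrm g1)\<^sup>2 + (nrm g2)\<^sup>2) = ip f u"
      and v: "nrm v \<le> K * (nrm g1 + nrm g2 + nrm u)"
      using bound by blast
    then have "K * (nrm g1 + nrm g2 + nrm u)
        \<le> K * (3 * sqrt (1 + lam) / lam * nrm (\<lambda>x. f x + complex_of_real lam * u x))"
      using K \<open>0 < lam\<close> by (intro mult_left_mono nrm_gradients_resolvent_le) simp_all
    with v show "nrm v \<le> 3 * K * sqrt (1 + lam) / lam * nrm (\<lambda>x. f x + complex_of_real lam * u x)"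
      by (simp add: algebra_simps)
  qed
next
  show "\<forall>\<epsilon>>0. \<exists>C. \<forall>u f v. h_graph b u f \<longrightarrow> clos_graph Y u v \<longrightarrow> nrm v \<le> \<epsilon> * nrm f + C * nrm u"
  proof (intro allI impI)
    fix \<epsilon> :: real assume "0 < \<epsilon>"
    show "\<exists>C. \<forall>u f v. h_graph b u f \<longrightarrow> clos_graph Y u v \<longrightarrow> nrm v \<le> \<epsilon> * nrm f + C * nrm u"
    proof (intro exI[of _ "K * (K / \<epsilon> + 1)"] allI impI)
      fix u f v assume "h_graph b u f" "clos_graph Y u v"
      then obtain g1 g2 where "L2 f" "L2 u" "complex_of_real ((nrm g1)\<^sup>2 + (nrm g2)\<^sup>2) = ip f u"
        and v: "nrm v \<le> K * (nrm g1 + nrm g2 + nrm u)"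
        using bound by blast
      then have "K * (nrm g1 + nrm g2 + nrm u) \<le> K * (\<epsilon> / K * nrm f + nrm u / (\<epsilon> / K) + nrm u)"
        using K \<open>0 < \<epsilon>\<close> by (intro mult_left_mono add_right_mono nrm_gradients_le) simp_all
      also have "\<dots> = \<epsilon> * nrm f + K * (K / \<epsilon> + 1) * nrm u"
        using K by (simp add: algebra_simps)
      finally show "nrm v \<le> \<epsilon> * nrm f + K * (K / \<epsilon> + 1) * nrm u"
        using v by linarith
    qed
  qed
qed

lemma nrm_combination_bound:
  assumes "C1_bounded d1" "C1_bounded d2" "C1_bounded c0"
  obtains K where "0 < K" "\<And>g1 g2 u. L2 g1 \<Longrightarrow> L2 g2 \<Longrightarrow> L2 u \<Longrightarrow>
    nrm (\<lambda>x. d1 x * g1 x + d2 x * g2 x + c0 x * u x) \<le> K * (nrm g1 + nrm g2 + nrm u)"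
proof -
  obtain M1 M2 M0 where M: "0 \<le> M1" "\<And>x. cmod (d1 x) \<le> M1" "d1 \<in> borel_measurable lebE"
    "0 \<le> M2" "\<And>x. cmod (d2 x) \<le> M2" "d2 \<in> borel_measurable lebE"
    "0 \<le> M0" "\<And>x. cmod (c0 x) \<le> M0" "c0 \<in> borel_measurable lebE"
    using C1_boundedE[OF assms(1)] C1_boundedE[OF assms(2)] C1_boundedE[OF assms(3)] by metis
  have "nrm (\<lambda>x. d1 x * g1 x + d2 x * g2 x + c0 x * u x) \<le> (M1 + M2 + M0 + 1) * (nrm g1 + nrm g2 + nrm u)"
    if L: "L2 g1" "L2 g2" "L2 u" for g1 g2 u
  proof -
    have L': "L2 (\<lambda>x. d1 x * g1 x)" "L2 (\<lambda>x. d2 x * g2 x)" "L2 (\<lambda>x. c0 x * u x)"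
      using L M by (auto intro: L2_mult_bounded)
    have "nrm (\<lambda>x. d1 x * g1 x + d2 x * g2 x + c0 x * u x)
        \<le> nrm (\<lambda>x. d1 x * g1 x + d2 x * g2 x) + nrm (\<lambda>x. c0 x * u x)"
      using nrm_triangle[OF L2_add[OF L'(1,2)] L'(3)] .
    also have "\<dots> \<le> nrm (\<lambda>x. d1 x * g1 x) + nrm (\<lambda>x. d2 x * g2 x) + nrm (\<lambda>x. c0 x * u x)"
      using nrm_triangle[OF L'(1,2)] by simp
    also have "\<dots> \<le> M1 * nrm g1 + M2 * nrm g2 + M0 * nrm u"
      using nrm_mult_le[OF L(1) M(3,2) M(1)] nrm_mult_le[OF L(2) M(6,5) M(4)]
        nrm_mult_le[OF L(3) M(9,8) M(7)] by (simp add: add_mono)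
    also have "\<dots> \<le> (M1 + M2 + M0 + 1) * (nrm g1 + nrm g2 + nrm u)"
      using M nrm_nonneg[of g1] nrm_nonneg[of g2] nrm_nonneg[of u] by (simp add: algebra_simps add_mono mult_left_mono)
    finally show ?thesis .
  qed
  moreover have "0 < M1 + M2 + M0 + 1" using M by simp
  ultimately show ?thesis using that by blast
qed

lemma clos_graph_combination:
  assumes C: "C1_bounded d1" "C1_bounded d2" "C1_bounded c0"
    and Y: "\<And>\<psi>. Y \<psi> = (\<lambda>x. d1 x * P01 b \<psi> x + d2 x * P02 b \<psi> x + c0 x * \<psi> x)"
    and "form_dom b u g1 g2"
  shows "clos_graph Y u (\<lambda>x. d1 x * g1 x + d2 x * g2 x + c0 x * u x)"
    and "clos_graph Y u v \<Longrightarrow> nrm v \<le> nrm (\<lambda>x. d1 x * g1 x + d2 x * g2 x + c0 x * u x)"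
proof -
  define V where "V x = d1 x * g1 x + d2 x * g2 x + c0 x * u x" for x
  obtain \<phi> where \<phi>: "\<And>n. \<phi> n \<in> Cc" "L2_conv \<phi> u"
    and g: "L2_conv (\<lambda>n. P01 b (\<phi> n)) g1" "L2_conv (\<lambda>n. P02 b (\<phi> n)) g2"
    using assms(5) unfolding form_dom_def by blast
  obtain M1 M2 M0 where "\<And>x. cmod (d1 x) \<le> M1" "d1 \<in> borel_measurable lebE"
    "\<And>x. cmod (d2 x) \<le> M2" "d2 \<in> borel_measurable lebE" "\<And>x. cmod (c0 x) \<le> M0" "c0 \<in> borel_measurable lebE"
    using C1_boundedE[OF C(1)] C1_boundedE[OF C(2)] C1_boundedE[OF C(3)] by metis
  then have YV: "L2_conv (\<lambda>n. Y (\<phi> n)) V"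
    unfolding Y V_def
    using L2_conv_add[OF L2_conv_add[OF L2_conv_mult_bounded[OF g(1)] L2_conv_mult_bounded[OF g(2)]]
        L2_conv_mult_bounded[OF \<phi>(2)]] by blast
  then show "clos_graph Y u (\<lambda>x. d1 x * g1 x + d2 x * g2 x + c0 x * u x)"
    using \<phi> unfolding clos_graph_def V_def[symmetric] by blast
  assume "clos_graph Y u v"
  then obtain \<psi> where \<psi>: "\<And>n. \<psi> n \<in> Cc" "L2_conv \<psi> u" "L2_conv (\<lambda>n. Y (\<psi> n)) v"
    unfolding clos_graph_def by blast
  have "Y = first_order_op (\<lambda>x. - \<i> * d1 x) (\<lambda>x. - \<i> * d2 x) (\<lambda>x. d1 x * complex_of_real (b * x $ 2) + c0 x)"
    by (simp add: fun_eq_iff Y first_order_op_def P01_def P02_def algebra_simps)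
  moreover have "C1_on UNIV (\<lambda>x. - \<i> * d1 x)"
    using C(1) unfolding C1_bounded_def by (intro C1_on_mult C1_on_const) auto
  moreover have "C1_on UNIV (\<lambda>x. - \<i> * d2 x)"
    using C(2) unfolding C1_bounded_def by (intro C1_on_mult C1_on_const) auto
  moreover have "C1_on UNIV (\<lambda>x. d1 x * complex_of_real (b * x $ 2) + c0 x)"
    using C(1,3) unfolding C1_bounded_def by (intro C1_on_add C1_on_mult C1_on_of_real_linear) auto
  ultimately have "nrm (\<lambda>x. v x - V x) = 0"
    using first_order_op_closable[OF _ _ _ \<psi>(1,2) _ \<phi>] \<psi>(3) YV by simp
  moreover have "nrm v \<le> nrm V + nrm (\<lambda>x. v x - V x)"
    using nrm_triangle[OF L2_convD(1)[OF YV] L2_diff[OF L2_convD(1)[OF \<psi>(3)] L2_convD(1)[OF YV]]] by simp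
  ultimately show "nrm v \<le> nrm (\<lambda>x. d1 x * g1 x + d2 x * g2 x + c0 x * u x)"
    unfolding V_def by simp
qed

lemma h_relatively_bounded_combination:
  assumes "C1_bounded d1" "C1_bounded d2" "C1_bounded c0"
    and "\<And>\<psi>. Y \<psi> = (\<lambda>x. d1 x * P01 b \<psi> x + d2 x * P02 b \<psi> x + c0 x * \<psi> x)"
  shows "h_relatively_bounded b Y"
proof -
  obtain K where K: "0 < K" "\<And>g1 g2 u. L2 g1 \<Longrightarrow> L2 g2 \<Longrightarrow> L2 u \<Longrightarrow>
    nrm (\<lambda>x. d1 x * g1 x + d2 x * g2 x + c0 x * u x) \<le> K * (nrm g1 + nrm g2 + nrm u)"
    using nrm_combination_bound[OF assms(1-3)] by blast
  show ?thesis
  proof (rule h_relatively_boundedI[OF K(1)])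
    fix u f assume "h_graph b u f"
    then obtain g1 g2 where "form_dom b u g1 g2" "complex_of_real ((nrm g1)\<^sup>2 + (nrm g2)\<^sup>2) = ip f u"
      "L2 f" "L2 u" "L2 g1" "L2 g2"
      by (rule h_graph_gradients)
    note clos = clos_graph_combination[OF assms this(1)]
    show "\<exists>v. clos_graph Y u v"
      using clos(1) by blast
    show "\<exists>g1 g2. L2 f \<and> L2 u \<and> complex_of_real ((nrm g1)\<^sup>2 + (nrm g2)\<^sup>2) = ip f u
        \<and> nrm v \<le> K * (nrm g1 + nrm g2 + nrm u)" if "clos_graph Y u v" for v
    proof (intro exI conjI)
      show "nrm v \<le> K * (nrm g1 + nrm g2 + nrm u)"
        using clos(2)[OF that] K(2)[OF \<open>L2 g1\<close> \<open>L2 g2\<close> \<open>L2 u\<close>] by (rule order_trans)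
    qed fact+
  qed
qed

lemma h_relatively_bounded_P1: "BC_inf Av \<Longrightarrow> h_relatively_bounded b (P1 b Av)"
  using C1_bounded_of_real_iter_pd[OF BC_inf_vec_nth, of Av "[]" 1]
  by (intro h_relatively_bounded_combination[of "\<lambda>_. 1" "\<lambda>_. 0" "\<lambda>x. 0 - complex_of_real (Av x $ 1)"]
      C1_bounded_const C1_bounded_diff[OF C1_bounded_const])
    (auto simp: fun_eq_iff P1_def)

lemma h_relatively_bounded_P2: "BC_inf Av \<Longrightarrow> h_relatively_bounded b (P2 b Av)"
  using C1_bounded_of_real_iter_pd[OF BC_inf_vec_nth, of Av "[]" 2]
  by (intro h_relatively_bounded_combination[of "\<lambda>_. 0" "\<lambda>_. 1" "\<lambda>x. 0 - complex_of_real (Av x $ 2)"]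
      C1_bounded_const C1_bounded_diff[OF C1_bounded_const])
    (auto simp: fun_eq_iff P2_def)

lemma h_relatively_bounded_W:
  assumes "BC_inf Av" "BC_inf V"
  shows "h_relatively_bounded b (W b Av V)"
proof -
  define A where "A j x = complex_of_real (Av x $ j)" for j x
  define D where "D j x = complex_of_real (pdiff j (\<lambda>y. Av y $ j) x)" for j x
  have C: "C1_bounded (A j)" "C1_bounded (D j)" "C1_bounded (\<lambda>x. complex_of_real (V x))" for j
    using C1_bounded_of_real_iter_pd[OF BC_inf_vec_nth[OF assms(1)], of "[]" j]
      C1_bounded_of_real_iter_pd[OF BC_inf_vec_nth[OF assms(1)], of "[j]" j]
      C1_bounded_of_real_iter_pd[OF assms(2), of "[]"]
    by (simp_all add: A_def[abs_def] D_def[abs_def])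
  have "complex_of_real ((norm (Av x))\<^sup>2) = A 1 x * A 1 x + A 2 x * A 2 x" for x
    by (simp add: A_def power2_norm_eq_inner inner_vec_def sum_2)
  then have "W b Av V \<psi> = (\<lambda>x. (- 2 * A 1 x) * P01 b \<psi> x + (- 2 * A 2 x) * P02 b \<psi> x
      + (3 * (A 1 x * A 1 x + A 2 x * A 2 x) - \<i> * (D 1 x + D 2 x) + complex_of_real (V x)) * \<psi> x)" for \<psi>
    by (simp add: fun_eq_iff W_def P1_def P2_def A_def D_def algebra_simps)
  then show ?thesis
    using C by (intro h_relatively_bounded_combination[of "\<lambda>x. - 2 * A 1 x" "\<lambda>x. - 2 * A 2 x"
        "\<lambda>x. 3 * (A 1 x * A 1 x + A 2 x * A 2 x) - \<i> * (D 1 x + D 2 x) + complex_of_real (V x)"]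
        C1_bounded_add C1_bounded_diff C1_bounded_mult C1_bounded_const) auto
qed

theorem lemma2p5:
  fixes V :: "R2 \<Rightarrow> real" and Av :: "R2 \<Rightarrow> real^2" and b :: real
    and Y :: "cfun \<Rightarrow> cfun"
  assumes "BC_inf V" and "BC_inf Av"
    and "Y \<in> {P1 b Av, P2 b Av, W b Av V}"
  shows "(\<forall>u f. h_graph b u f \<longrightarrow> (\<exists>v. clos_graph Y u v))
    \<and> (\<exists>C. \<forall>lam>0. \<forall>u f v. h_graph b u f \<longrightarrow> clos_graph Y u v \<longrightarrow>
           nrm v \<le> C * sqrt (1 + lam) / lam * nrm (\<lambda>x. f x + complex_of_real lam * u x))
    \<and> (\<forall>\<epsilon>>0. \<exists>C\<^sub>\<epsilon>. \<forall>u f v. h_graph b u f \<longrightarrow> clos_graph Y u v \<longrightarrow>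
           nrm v \<le> \<epsilon> * nrm f + C\<^sub>\<epsilon> * nrm u)"
proof -
  have "h_relatively_bounded b Y"
    using assms h_relatively_bounded_P1 h_relatively_bounded_P2 h_relatively_bounded_W by blast
  then show ?thesis
    unfolding h_relatively_bounded_def .
qed

end
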